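(* Let $p,l$ be distinct odd primes and let $\Gamma$, $\Gamma_p$, $\Gamma_l$ be as in the context. Let $a\in\Gamma_p\setminus\{1\}$ and $b\in\Gamma_l\setminus\{1\}$. Then either $\langle a,b\rangle\cong\mathbb Z^2$ or $\langle a,b\rangle$ contains a free subgroup of rank $2$.
   Context: Let $p,l$ be distinct odd primes. Let $\mathbb H(\mathbb Z)$ be the ring of quaternions $x=x_0+x_1i+x_2j+x_3k$ with $x_0,\dots,x_3\in\mathbb Z$, where $i^2=j^2=k^2=-1$, $ij=-ji=k$; write $|x|^2=x_0^2+x_1^2+x_2^2+x_3^2$. Fix $c_p,d_p\in\mathbb Q_p$ with $c_p^2+d_p^2+1=0$ and $c_l,d_l\in\mathbb Q_l$ with $c_l^2+d_l^2+1=0$. Define $\psi:\mathbb H(\mathbb Z)\setminus\{0\}\to G:=PGL_2(\mathbb Q_p)\times PGL_2(\mathbb Q_l)$ by sending $x$ to the class of the pair $\left(\begin{pmatrix} x_0+x_1c_p+x_3d_p & -x_1d_p+x_2+x_3c_p\\ -x_1d_p-x_2+x_3c_p & x_0-x_1c_p-x_3d_p\end{pmatrix},\begin{pmatrix} x_0+x_1c_l+x_3d_l & -x_1d_l+x_2+x_3c_l\\ -x_1d_l-x_2+x_3c_l & x_0-x_1c_l-x_3d_l\end{pmatrix}\right)$. Let $\tilde\Gamma$ be the set of $x\in\mathbb H(\mathbb Z)$ such that $|x|^2=p^rl^s$ for some integers $r,s\ge 0$, and such that $x_0$ is odd and $x_1,x_2,x_3$ are even if $|x|^2\equiv 1\pmod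 4$, while $x_1$ is even and $x_0,x_2,x_3$ are odd if $|x|^2\equiv 3\pmod 4$. Then $\Gamma=\psi(\tilde\Gamma)$ is a torsion-free cocompact lattice in $G$. Let $\tilde A=\{x\in\tilde\Gamma: x_0>0,\ |x|^2=p\}$ and $\tilde B=\{y\in\tilde\Gamma: y_0>0,\ |y|^2=l\}$; $\Gamma_p$ (resp. $\Gamma_l$) is the subgroup of $\Gamma$ generated by $\psi(\tilde A)$ (resp. $\psi(\tilde B)$). These are free groups of ranks $(p+1)/2$ and $(l+1)/2$, and together they generate $\Gamma$. *)

theory Defs
  imports "HOL-Algebra.Algebra"
begin

text \<open>Integral quaternions x0 + x1 i + x2 j + x3 k, with i^2 = j^2 = k^2 = -1, ij = -ji = k.\<close>

datatype hq = HQ (q0: int) (q1: int) (q2: int) (q3: int)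

definition qmult :: "hq \<Rightarrow> hq \<Rightarrow> hq" where
  "qmult x y = HQ
     (q0 x * q0 y - q1 x * q1 y - q2 x * q2 y - q3 x * q3 y)
     (q0 x * q1 y + q1 x * q0 y + q2 x * q3 y - q3 x * q2 y)
     (q0 x * q2 y - q1 x * q3 y + q2 x * q0 y + q3 x * q1 y)
     (q0 x * q3 y + q1 x * q2 y - q2 x * q1 y + q3 x * q0 y)"

definition qone :: hq where "qone = HQ 1 0 0 0"

definition qscale :: "int \<Rightarrow> hq \<Rightarrow> hq" where
  "qscale m x = HQ (m * q0 x) (m * q1 x) (m * q2 x) (m * q3 x)"

definition qnorm :: "hq \<Rightarrow> int" where
  "qnorm x = (q0 x)^2 + (q1 x)^2 + (q2 x)^2 + (q3 x)^2"

definition Gamma_tilde :: "int \<Rightarrow> int \<Rightarrow> hq set" where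
  "Gamma_tilde p l = {x. (\<exists>r s::nat. qnorm x = p ^ r * l ^ s) \<and>
      (qnorm x mod 4 = 1 \<longrightarrow> odd (q0 x) \<and> even (q1 x) \<and> even (q2 x) \<and> even (q3 x)) \<and>
      (qnorm x mod 4 = 3 \<longrightarrow> even (q1 x) \<and> odd (q0 x) \<and> odd (q2 x) \<and> odd (q3 x))}"

text \<open>Two elements of \<open>\<Gamma>~\<close> have the same image under \<open>\<psi>\<close> iff they are proportional
  by a nonzero rational scalar (\<open>\<psi>\<close> extends to an injective algebra homomorphism
  H(Q) \<rightarrow> M_2(Q_p), and PGL_2 is GL_2 modulo scalars).  We represent \<open>\<psi>(x)\<close> by this
  class of \<open>x\<close>.\<close>
definition psi_class :: "int \<Rightarrow> int \<Rightarrow> hq \<Rightarrow> hq set" where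
  "psi_class p l x = {y \<in> Gamma_tilde p l.
      \<exists>m n::int. m \<noteq> 0 \<and> n \<noteq> 0 \<and> qscale m x = qscale n y}"

text \<open>The lattice \<open>\<Gamma> = \<psi>(\<Gamma>~)\<close> as an abstract group (multiplication induced by
  quaternion multiplication, i.e. by matrix multiplication under \<psi>).\<close>
definition Gamma_grp :: "int \<Rightarrow> int \<Rightarrow> hq set monoid" where
  "Gamma_grp p l = \<lparr> carrier = psi_class p l ` Gamma_tilde p l,
      monoid.mult = (\<lambda>A B. psi_class p l (qmult (SOME x. x \<in> A) (SOME y. y \<in> B))),
      one = psi_class p l qone \<rparr>"

definition A_tilde :: "int \<Rightarrow> int \<Rightarrow> hq set" where
  "A_tilde p l = {x \<in> Gamma_tilde p l. q0 x > 0 \<and> qnorm x = p}"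

definition B_tilde :: "int \<Rightarrow> int \<Rightarrow> hq set" where
  "B_tilde p l = {y \<in> Gamma_tilde p l. q0 y > 0 \<and> qnorm y = l}"

definition Gamma_p :: "int \<Rightarrow> int \<Rightarrow> hq set set" where
  "Gamma_p p l = generate (Gamma_grp p l) (psi_class p l ` A_tilde p l)"

definition Gamma_l :: "int \<Rightarrow> int \<Rightarrow> hq set set" where
  "Gamma_l p l = generate (Gamma_grp p l) (psi_class p l ` B_tilde p l)"

text \<open>A letter is a pair
  (generator: True = u, False = v; exponent: True = +1, False = -1).\<close>
definition letter_val :: "('a, 'b) monoid_scheme \<Rightarrow> 'a \<Rightarrow> 'a \<Rightarrow> bool \<times> bool \<Rightarrow> 'a" where
  "letter_val G u v c = (let g = (if fst c then u else v) in if snd c then g else inv\<^bsub>G\<^esub> g)"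

definition word_val :: "('a, 'b) monoid_scheme \<Rightarrow> 'a \<Rightarrow> 'a \<Rightarrow> (bool \<times> bool) list \<Rightarrow> 'a" where
  "word_val G u v w = foldr (\<lambda>c acc. letter_val G u v c \<otimes>\<^bsub>G\<^esub> acc) w \<one>\<^bsub>G\<^esub>"

definition reduced_word :: "(bool \<times> bool) list \<Rightarrow> bool" where
  "reduced_word w = successively (\<lambda>c d. \<not> (fst c = fst d \<and> snd c \<noteq> snd d)) w"

definition free_pair :: "('a, 'b) monoid_scheme \<Rightarrow> 'a \<Rightarrow> 'a \<Rightarrow> bool" where
  "free_pair G u v \<longleftrightarrow> (\<forall>w. w \<noteq> [] \<and> reduced_word w \<longrightarrow> word_val G u v w \<noteq> \<one>\<^bsub>G\<^esub>)"

definition contains_free_rank2 :: "('a, 'b) monoid_scheme \<Rightarrow> 'a set \<Rightarrow> bool" where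
  "contains_free_rank2 G H \<longleftrightarrow> (\<exists>u \<in> H. \<exists>v \<in> H. free_pair G u v)"

end

theory Submission
  imports Defs "HOL-Computational_Algebra.Primes"
begin

text \<open>
  Everything happens in the Bruhat--Tits tree of \<open>PGL\<^sub>2(\<Q>\<^sub>p)\<close>, whose geometry is read off
  from \<open>p\<close>-adic valuations of norms and contents of integral quaternions. Elements of
  \<open>\<Gamma>\<^sub>l\<close> have norm prime to \<open>p\<close>, so they fix the base vertex \<open>v\<^sub>0\<close>, while \<open>\<Gamma>\<close> is
  torsion-free and acts freely; hence every \<open>a \<noteq> 1\<close> in \<open>\<Gamma>\<^sub>p\<close> acts hyperbolically.

  If \<open>a\<close> and \<open>b\<close> commute, a relation \<open>a\<^sup>m b\<^sup>n = 1\<close> makes \<open>a\<^sup>m\<close> fix \<open>v\<^sub>0\<close>, so \<open>m = 0\<close>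
  and then \<open>n = 0\<close>: \<open>\<langle>a, b\<rangle> \<cong> \<Z>\<^sup>2\<close>. Otherwise \<open>b\<close> moves the axis of \<open>a\<close>, and a
  pigeonhole argument over the finitely many quaternions of bounded norm bounds the
  Gromov products of \<open>a\<^sup>\<plusminus>\<^sup>M v\<^sub>0\<close> and \<open>b a\<^sup>\<plusminus>\<^sup>M v\<^sub>0\<close> independently of \<open>M\<close>. For large \<open>M\<close> the
  elements \<open>a\<^sup>M\<close> and \<open>b a\<^sup>M b\<^sup>-\<^sup>1\<close> then play ping-pong: every nonempty reduced word in
  them moves \<open>v\<^sub>0\<close>, so they freely generate a free group of rank \<open>2\<close>.
\<close>

section \<open>The ring of integral quaternions\<close>

instantiation hq :: ring_1
begin
definition "zero_hq = HQ 0 0 0 0"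
definition "one_hq = HQ 1 0 0 0"
definition "plus_hq x y = HQ (q0 x + q0 y) (q1 x + q1 y) (q2 x + q2 y) (q3 x + q3 y)"
definition "minus_hq x y = HQ (q0 x - q0 y) (q1 x - q1 y) (q2 x - q2 y) (q3 x - q3 y)"
definition "uminus_hq x = HQ (- q0 x) (- q1 x) (- q2 x) (- q3 x)"
definition "times_hq x y = qmult x y"
instance
  by standard (auto simp: zero_hq_def one_hq_def plus_hq_def minus_hq_def uminus_hq_def times_hq_def
      qmult_def algebra_simps intro: hq.expand)
end

lemma hq_eq_iff: "x = y \<longleftrightarrow> q0 x = q0 y \<and> q1 x = q1 y \<and> q2 x = q2 y \<and> q3 x = q3 y"
  by (auto intro: hq.expand)

lemma hq_sel_simps [simp]:
  "q0 0 = 0" "q1 0 = 0" "q2 0 = 0" "q3 0 = 0"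
  "q0 1 = 1" "q1 1 = 0" "q2 1 = 0" "q3 1 = 0"
  "q0 (x + y) = q0 x + q0 y" "q1 (x + y) = q1 x + q1 y" "q2 (x + y) = q2 x + q2 y" "q3 (x + y) = q3 x + q3 y"
  "q0 (x - y) = q0 x - q0 y" "q1 (x - y) = q1 x - q1 y" "q2 (x - y) = q2 x - q2 y" "q3 (x - y) = q3 x - q3 y"
  "q0 (- x) = - q0 x" "q1 (- x) = - q1 x" "q2 (- x) = - q2 x" "q3 (- x) = - q3 x"
  by (simp_all add: zero_hq_def one_hq_def plus_hq_def minus_hq_def uminus_hq_def)

lemma hq_mult_sel [simp]:
  "q0 (x * y) = q0 x * q0 y - q1 x * q1 y - q2 x * q2 y - q3 x * q3 y"
  "q1 (x * y) = q0 x * q1 y + q1 x * q0 y + q2 x * q3 y - q3 x * q2 y"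
  "q2 (x * y) = q0 x * q2 y - q1 x * q3 y + q2 x * q0 y + q3 x * q1 y"
  "q3 (x * y) = q0 x * q3 y + q1 x * q2 y - q2 x * q1 y + q3 x * q0 y"
  by (simp_all add: times_hq_def qmult_def)

lemma qmult_eq_times: "qmult x y = x * y"
  by (simp add: times_hq_def)

lemma qone_eq_one: "qone = 1"
  by (simp add: qone_def one_hq_def)

lemma of_int_hq_sel [simp]:
  "q0 (of_int m :: hq) = m" "q1 (of_int m :: hq) = 0" "q2 (of_int m :: hq) = 0" "q3 (of_int m :: hq) = 0"
proof -
  have "q0 (of_nat n :: hq) = int n \<and> q1 (of_nat n :: hq) = 0 \<and> q2 (of_nat n :: hq) = 0 \<and> q3 (of_nat n :: hq) = 0"
    for n by (induct n) auto
  then show "q0 (of_int m :: hq) = m" "q1 (of_int m :: hq) = 0" "q2 (of_int m :: hq) = 0" "q3 (of_int m :: hq) = 0"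
    by (cases m rule: int_cases; simp)+
qed

lemma numeral_hq_sel [simp]:
  "q0 (numeral n :: hq) = numeral n" "q1 (numeral n :: hq) = 0" "q2 (numeral n :: hq) = 0" "q3 (numeral n :: hq) = 0"
  by (metis of_int_numeral of_int_hq_sel)+

lemma qscale_eq_of_int_mult: "qscale m x = of_int m * x"
  by (simp add: qscale_def hq_eq_iff)

lemma of_int_mult_commute: "(of_int m :: hq) * x = x * of_int m"
  by (simp add: hq_eq_iff algebra_simps)

lemma mult_of_int_left_commute: "x * (of_int m * y) = of_int m * (x * (y :: hq))"
  by (metis mult.assoc of_int_mult_commute)

definition qconj :: "hq \<Rightarrow> hq" where
  "qconj x = HQ (q0 x) (- q1 x) (- q2 x) (- q3 x)"

lemma qconj_sel [simp]: "q0 (qconj x) = q0 x" "q1 (qconj x) = - q1 x" "q2 (qconj x) = - q2 x" "q3 (qconj x) = - q3 x"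
  by (simp_all add: qconj_def)

lemma qconj_mult: "qconj (x * y) = qconj y * qconj x"
  by (simp add: hq_eq_iff algebra_simps)

lemma qconj_qconj [simp]: "qconj (qconj x) = x"
  by (simp add: hq_eq_iff)

lemma qconj_of_int [simp]: "qconj (of_int m) = of_int m"
  by (simp add: hq_eq_iff)

lemma add_qconj: "x + qconj x = of_int (2 * q0 x)"
  by (simp add: hq_eq_iff)

lemma mult_qconj: "x * qconj x = of_int (qnorm x)"
  by (simp add: hq_eq_iff qnorm_def algebra_simps power2_eq_square)

lemma qconj_mult_self: "qconj x * x = of_int (qnorm x)"
  by (simp add: hq_eq_iff qnorm_def algebra_simps power2_eq_square)

lemma mult_qconj_left_cancel: "x * (qconj x * y) = of_int (qnorm x) * y"
  by (simp only: mult.assoc[symmetric] mult_qconj)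

lemma qconj_mult_left_cancel: "qconj x * (x * y) = of_int (qnorm x) * y"
  by (simp only: mult.assoc[symmetric] qconj_mult_self)

lemma qnorm_mult: "qnorm (x * y) = qnorm x * qnorm y"
  by (simp add: qnorm_def algebra_simps power2_eq_square)

lemma qnorm_qconj [simp]: "qnorm (qconj x) = qnorm x"
  by (simp add: qnorm_def)

lemma qnorm_of_int [simp]: "qnorm (of_int m) = m^2"
  by (simp add: qnorm_def)

lemma qnorm_zero [simp]: "qnorm 0 = 0"
  by (simp add: qnorm_def)

lemma qnorm_one [simp]: "qnorm 1 = 1"
  by (simp add: qnorm_def)

lemma qnorm_eq_0_iff [simp]: "qnorm x = 0 \<longleftrightarrow> x = 0"
  by (auto simp: qnorm_def hq_eq_iff add_nonneg_eq_0_iff)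

lemma qnorm_power: "qnorm (x ^ n) = qnorm x ^ n"
  by (induct n) (auto simp: qnorm_mult)

lemma qconj_power: "qconj (x ^ n) = qconj x ^ n"
proof (induct n)
  case (Suc n)
  have "qconj (x ^ Suc n) = qconj (x ^ n * x)"
    by (simp only: power_Suc2)
  then show ?case
    by (simp add: qconj_mult Suc)
qed (simp add: hq_eq_iff)

lemma qconj_eq_0_iff [simp]: "qconj x = 0 \<longleftrightarrow> x = 0"
  by (metis qnorm_qconj qnorm_eq_0_iff)

instance hq :: ring_1_no_zero_divisors
  by standard (metis qnorm_mult qnorm_eq_0_iff mult_eq_0_iff)

instance hq :: ring_char_0
proof
  show "inj (of_nat :: nat \<Rightarrow> hq)"
    by (rule injI) (metis of_int_of_nat_eq of_int_hq_sel(1) of_nat_eq_iff)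
qed

lemma polarization_identity:
  "qconj x * y * w * z + qconj x * qconj w * (qconj y * z) = of_int (2 * q0 (y * w)) * (qconj x * z)"
proof -
  have "qconj x * y * w * z + qconj x * qconj w * (qconj y * z) = qconj x * ((y * w + qconj (y * w)) * z)"
    by (simp add: qconj_mult distrib_left distrib_right mult.assoc)
  also have "\<dots> = of_int (2 * q0 (y * w)) * (qconj x * z)"
    by (simp only: add_qconj mult_of_int_left_commute)
  finally show ?thesis .
qed

section \<open>The Bruhat--Tits tree of \<open>PGL\<^sub>2(\<Q>\<^sub>p)\<close>, seen from integral quaternions\<close>

definition qdvd :: "int \<Rightarrow> hq \<Rightarrow> bool" where
  "qdvd d x \<longleftrightarrow> d dvd q0 x \<and> d dvd q1 x \<and> d dvd q2 x \<and> d dvd q3 x"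

definition qcontent :: "hq \<Rightarrow> int" where
  "qcontent x = gcd (gcd (q0 x) (q1 x)) (gcd (q2 x) (q3 x))"

definition vcontent :: "int \<Rightarrow> hq \<Rightarrow> nat" where
  "vcontent p x = multiplicity p (qcontent x)"

definition vnorm :: "int \<Rightarrow> hq \<Rightarrow> nat" where
  "vnorm p x = multiplicity p (qnorm x)"

text \<open>Under \<open>\<psi>\<close>, a nonzero \<open>x\<close> moves the standard vertex \<open>v\<^sub>0\<close> of the tree of \<open>PGL\<^sub>2(\<Q>\<^sub>p)\<close>
  to distance \<open>tree_dist p x\<close>, and since \<open>qconj x\<close> represents \<open>\<psi>(x)\<^sup>-\<^sup>1\<close>,
  \<open>cancellation p x y\<close> and \<open>gromov p x y\<close> are the Gromov products \<open>(x\<^sup>-\<^sup>1v\<^sub>0 | y v\<^sub>0)\<close> and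
  \<open>(x v\<^sub>0 | y v\<^sub>0)\<close> based at \<open>v\<^sub>0\<close>; the tree itself is never constructed.\<close>

definition tree_dist :: "int \<Rightarrow> hq \<Rightarrow> int" where
  "tree_dist p x = int (vnorm p x) - 2 * int (vcontent p x)"

definition cancellation :: "int \<Rightarrow> hq \<Rightarrow> hq \<Rightarrow> int" where
  "cancellation p x y = int (vcontent p (x * y)) - int (vcontent p x) - int (vcontent p y)"

definition gromov :: "int \<Rightarrow> hq \<Rightarrow> hq \<Rightarrow> int" where
  "gromov p x y = cancellation p (qconj x) y"

lemma dvd_qcontent_iff: "d dvd qcontent x \<longleftrightarrow> qdvd d x"
  by (simp add: qcontent_def qdvd_def)

lemma qcontent_eq_0_iff: "qcontent x = 0 \<longleftrightarrow> x = 0"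
  by (auto simp: qcontent_def hq_eq_iff)

lemma qdvd_iff_ex: "d \<noteq> 0 \<Longrightarrow> qdvd d x \<longleftrightarrow> (\<exists>y. x = of_int d * y)"
proof
  assume "qdvd d x"
  then obtain a0 a1 a2 a3 where "q0 x = d * a0" "q1 x = d * a1" "q2 x = d * a2" "q3 x = d * a3"
    unfolding qdvd_def by (auto elim!: dvdE)
  then have "x = of_int d * HQ a0 a1 a2 a3" by (simp add: hq_eq_iff)
  then show "\<exists>y. x = of_int d * y" by blast
qed (auto simp: qdvd_def)

lemma qdvd_mult_right: "qdvd d x \<Longrightarrow> qdvd d (x * y)"
  by (simp add: qdvd_def)

lemma qdvd_mult_left: "qdvd d y \<Longrightarrow> qdvd d (x * y)"
  by (simp add: qdvd_def)

lemma qdvd_add: "qdvd d x \<Longrightarrow> qdvd d y \<Longrightarrow> qdvd d (x + y)"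
  by (simp add: qdvd_def)

lemma qdvd_mult_mult: "qdvd d x \<Longrightarrow> qdvd e y \<Longrightarrow> qdvd (d * e) (x * y)"
  unfolding qdvd_def hq_mult_sel by (intro conjI dvd_add dvd_diff mult_dvd_mono; simp)

lemma qdvd_imp_dvd_qnorm: "qdvd d x \<Longrightarrow> d^2 dvd qnorm x"
  unfolding qdvd_def qnorm_def power2_eq_square by (intro dvd_add mult_dvd_mono; simp)

lemma qdvd_of_int_mult_cancel: "d \<noteq> 0 \<Longrightarrow> qdvd (d * e) (of_int d * x) \<longleftrightarrow> qdvd e x"
  by (simp add: qdvd_def)

lemma qdvd_of_int_mult_coprime: "coprime d c \<Longrightarrow> qdvd d (of_int c * x) \<Longrightarrow> qdvd d x"
  by (simp add: qdvd_def coprime_dvd_mult_right_iff)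

lemma qcontent_of_int_mult: "qcontent (of_int m * x) = \<bar>m\<bar> * qcontent x"
proof -
  have gcd_mult: "gcd (k * a) (k * b) = \<bar>k\<bar> * gcd a b" for k a b :: int
    by (simp add: gcd_mult_left abs_mult)
  have "qcontent (of_int m * x) = gcd (gcd (m * q0 x) (m * q1 x)) (gcd (m * q2 x) (m * q3 x))"
    by (simp add: qcontent_def)
  also have "\<dots> = gcd (\<bar>m\<bar> * gcd (q0 x) (q1 x)) (\<bar>m\<bar> * gcd (q2 x) (q3 x))"
    by (simp only: gcd_mult)
  also have "\<dots> = \<bar>m\<bar> * qcontent x"
    by (simp only: gcd_mult qcontent_def abs_abs)
  finally show ?thesis .
qed

lemma vcontent_qconj [simp]: "vcontent p (qconj x) = vcontent p x"
  by (simp add: vcontent_def qcontent_def)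

lemma vnorm_qconj [simp]: "vnorm p (qconj x) = vnorm p x"
  by (simp add: vnorm_def)

lemma tree_dist_qconj [simp]: "tree_dist p (qconj x) = tree_dist p x"
  by (simp add: tree_dist_def)

lemma gromov_qconj_left: "gromov p (qconj x) y = cancellation p x y"
  by (simp add: gromov_def)

locale prime_int =
  fixes p :: int
  assumes prime: "Factorial_Ring.prime p"
begin

lemma not_unit: "\<not> is_unit p"
  using prime by (meson not_prime_unit)

lemma nonzero: "p \<noteq> 0"
  using prime by auto

lemma qdvd_power_iff: "x \<noteq> 0 \<Longrightarrow> qdvd (p ^ n) x \<longleftrightarrow> n \<le> vcontent p x"
  unfolding vcontent_def dvd_qcontent_iff[symmetric]
  using power_dvd_iff_le_multiplicity[of "qcontent x" p n] not_unit qcontent_eq_0_iff by blast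

lemma qdvd_power_vcontent: "qdvd (p ^ vcontent p x) x"
  unfolding vcontent_def dvd_qcontent_iff[symmetric] by (rule multiplicity_dvd)

lemma vcontent_eq_0: "\<not> qdvd p x \<Longrightarrow> vcontent p x = 0"
  using qdvd_power_iff[of x 1] by (cases "x = 0") (auto simp: qdvd_def)

lemma primitive_part:
  assumes "x \<noteq> 0"
  obtains y where "x = of_int (p ^ vcontent p x) * y" "\<not> qdvd p y" "y \<noteq> 0"
proof -
  obtain y where y: "x = of_int (p ^ vcontent p x) * y"
    using qdvd_power_vcontent[of x] qdvd_iff_ex[of "p ^ vcontent p x" x] nonzero by auto
  have "\<not> qdvd p y"
  proof
    assume "qdvd p y"
    then have "qdvd (p ^ Suc (vcontent p x)) x"
      using y qdvd_of_int_mult_cancel[of "p ^ vcontent p x" p y] nonzero by (simp add: mult.commute)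
    then show False using qdvd_power_iff[OF assms, of "Suc (vcontent p x)"] by simp
  qed
  moreover have "y \<noteq> 0"
    using y assms by (metis mult_zero_right)
  ultimately show ?thesis
    using y that by blast
qed

lemma vcontent_mult_ge: "x \<noteq> 0 \<Longrightarrow> y \<noteq> 0 \<Longrightarrow> vcontent p x + vcontent p y \<le> vcontent p (x * y)"
  using qdvd_mult_mult[OF qdvd_power_vcontent qdvd_power_vcontent, of x y]
  by (simp add: qdvd_power_iff flip: power_add)

lemma vcontent_of_int_mult:
  assumes "m \<noteq> 0" "x \<noteq> 0"
  shows "vcontent p (of_int m * x) = multiplicity p m + vcontent p x"
proof -
  have "vcontent p (of_int m * x) = multiplicity p (\<bar>m\<bar> * qcontent x)"
    by (simp only: vcontent_def qcontent_of_int_mult)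
  also have "\<dots> = multiplicity p \<bar>m\<bar> + multiplicity p (qcontent x)"
    by (rule prime_elem_multiplicity_mult_distrib) (use prime assms qcontent_eq_0_iff in auto)
  finally show ?thesis
    using multiplicity_normalize_right[of p m] by (simp add: vcontent_def)
qed

lemma vnorm_mult: "x \<noteq> 0 \<Longrightarrow> y \<noteq> 0 \<Longrightarrow> vnorm p (x * y) = vnorm p x + vnorm p y"
  unfolding vnorm_def qnorm_mult by (subst prime_elem_multiplicity_mult_distrib) (use prime in auto)

lemma vnorm_of_int: "m \<noteq> 0 \<Longrightarrow> vnorm p (of_int m) = 2 * multiplicity p m"
  unfolding vnorm_def qnorm_of_int by (subst prime_elem_multiplicity_power_distrib) (use prime in auto)

lemma vnorm_eq_0: "\<not> p dvd qnorm x \<Longrightarrow> vnorm p x = 0"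
  by (simp add: vnorm_def not_dvd_imp_multiplicity_0)

lemma vcontent_le_vnorm: "x \<noteq> 0 \<Longrightarrow> 2 * vcontent p x \<le> vnorm p x"
  using qdvd_imp_dvd_qnorm[OF qdvd_power_vcontent, of x] power_dvd_iff_le_multiplicity[of "qnorm x" p] not_unit
  by (simp add: vnorm_def mult.commute flip: power_mult)

lemma cancellation_nonneg:
  assumes "x \<noteq> 0" "y \<noteq> 0"
  shows "cancellation p x y \<ge> 0"
  using vcontent_mult_ge[OF assms] by (simp add: cancellation_def)

lemma tree_dist_mult:
  "x \<noteq> 0 \<Longrightarrow> y \<noteq> 0 \<Longrightarrow> tree_dist p (x * y) = tree_dist p x + tree_dist p y - 2 * cancellation p x y"
  by (simp add: tree_dist_def cancellation_def vnorm_mult)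

lemma tree_dist_of_int_mult: "m \<noteq> 0 \<Longrightarrow> x \<noteq> 0 \<Longrightarrow> tree_dist p (of_int m * x) = tree_dist p x"
  by (simp add: tree_dist_def vnorm_mult vnorm_of_int vcontent_of_int_mult)

lemma tree_dist_of_int: "m \<noteq> 0 \<Longrightarrow> tree_dist p (of_int m) = 0"
  using tree_dist_of_int_mult[of m 1] by (simp add: tree_dist_def vcontent_def qcontent_def vnorm_def)

lemma gromov_eq_tree_dist:
  "x \<noteq> 0 \<Longrightarrow> y \<noteq> 0 \<Longrightarrow> 2 * gromov p x y = tree_dist p x + tree_dist p y - tree_dist p (qconj x * y)"
  using tree_dist_mult[of "qconj x" y] by (simp add: gromov_def)

lemma gromov_commute: "gromov p x y = gromov p y x"
proof -
  have "vcontent p (qconj x * y) = vcontent p (qconj y * x)"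
    using vcontent_qconj[of p "qconj x * y"] by (simp add: qconj_mult)
  then show ?thesis by (simp add: gromov_def cancellation_def)
qed

lemma gromov_of_int_mult_left:
  assumes "m \<noteq> 0" "x \<noteq> 0" "y \<noteq> 0"
  shows "gromov p (of_int m * x) y = gromov p x y"
proof -
  have "qconj (of_int m * x) = of_int m * qconj x"
    by (simp add: qconj_mult of_int_mult_commute)
  then show ?thesis
    using assms by (simp add: gromov_def cancellation_def mult.assoc vcontent_of_int_mult)
qed

lemma gromov_of_int_mult_right:
  assumes "m \<noteq> 0" "x \<noteq> 0" "y \<noteq> 0"
  shows "gromov p x (of_int m * y) = gromov p x y"
  using gromov_of_int_mult_left[OF assms(1,3,2)] by (simp add: gromov_commute)

lemma gromov_primitive: "\<not> qdvd p x \<Longrightarrow> \<not> qdvd p y \<Longrightarrow> gromov p x y = int (vcontent p (qconj x * y))"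
  by (simp add: gromov_def cancellation_def vcontent_eq_0 qdvd_def)

lemma gromov_eq_primitive:
  assumes "x = of_int (p ^ a) * x'" "y = of_int (p ^ b) * y'" "\<not> qdvd p x'" "\<not> qdvd p y'" "x' \<noteq> 0" "y' \<noteq> 0"
  shows "gromov p x y = int (vcontent p (qconj x' * y'))"
  using assms by (simp add: gromov_of_int_mult_left gromov_of_int_mult_right nonzero gromov_primitive
      del: of_int_power)

text \<open>A \<open>p\<close>-unit fixes \<open>v\<^sub>0\<close>, so it acts on the left as an isometry fixing \<open>v\<^sub>0\<close> and
  is invisible on the right.\<close>

lemma vcontent_unit_mult:
  assumes b: "\<not> p dvd qnorm b" and z: "z \<noteq> 0"
  shows "vcontent p (b * z) = vcontent p z"
proof -
  have b0: "b \<noteq> 0" using b by auto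
  have "vcontent p z \<le> vcontent p (b * z)"
    using vcontent_mult_ge[OF b0 z] by simp
  moreover have "vcontent p (b * z) \<le> vcontent p (qconj b * (b * z))"
    using vcontent_mult_ge[of "qconj b" "b * z"] b0 z by simp
  moreover have "vcontent p (qconj b * (b * z)) = vcontent p z"
    using vcontent_of_int_mult[of "qnorm b" z] b0 z b
    by (simp add: qconj_mult_left_cancel not_dvd_imp_multiplicity_0)
  ultimately show ?thesis by simp
qed

lemma vcontent_mult_unit:
  assumes b: "\<not> p dvd qnorm b" and z: "z \<noteq> 0"
  shows "vcontent p (z * b) = vcontent p z"
  using vcontent_unit_mult[of "qconj b" "qconj z"] assms
  by (metis qconj_mult qnorm_qconj qconj_eq_0_iff vcontent_qconj)

lemma tree_dist_unit_mult: "\<not> p dvd qnorm b \<Longrightarrow> z \<noteq> 0 \<Longrightarrow> tree_dist p (b * z) = tree_dist p z"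
  by (cases "b = 0") (auto simp: tree_dist_def vcontent_unit_mult vnorm_mult vnorm_eq_0)

lemma tree_dist_mult_unit: "\<not> p dvd qnorm b \<Longrightarrow> z \<noteq> 0 \<Longrightarrow> tree_dist p (z * b) = tree_dist p z"
  by (cases "b = 0") (auto simp: tree_dist_def vcontent_mult_unit vnorm_mult vnorm_eq_0)

lemma gromov_unit_mult:
  assumes b: "\<not> p dvd qnorm b" and x: "x \<noteq> 0" and y: "y \<noteq> 0"
  shows "gromov p (b * x) (b * y) = gromov p x y"
proof -
  have b0: "b \<noteq> 0"
    using b by auto
  have "qconj (b * x) * (b * y) = of_int (qnorm b) * (qconj x * y)"
    by (simp add: qconj_mult mult.assoc qconj_mult_left_cancel mult_of_int_left_commute)
  moreover have "vcontent p (of_int (qnorm b) * (qconj x * y)) = vcontent p (qconj x * y)"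
    using vcontent_of_int_mult[of "qnorm b" "qconj x * y"] b b0 x y
    by (simp add: not_dvd_imp_multiplicity_0)
  ultimately show ?thesis
    using b b0 x y by (simp add: gromov_def cancellation_def vcontent_unit_mult)
qed

lemma gromov_mult_unit:
  "\<not> p dvd qnorm b \<Longrightarrow> x \<noteq> 0 \<Longrightarrow> y \<noteq> 0 \<Longrightarrow> gromov p x (y * b) = gromov p x y"
  by (simp add: gromov_def cancellation_def vcontent_mult_unit mult.assoc[symmetric])

end

locale odd_prime_int = prime_int +
  assumes odd: "odd p"
begin

text \<open>The tree is \<open>0\<close>-hyperbolic. Algebraically: if \<open>y\<close> is primitive and \<open>p\<^sup>m\<close> divides \<open>x\<^sup>* y\<close>
  and \<open>y\<^sup>* z\<close>, then by polarization it divides \<open>2 Re(y w) \<cdot> x\<^sup>* z\<close> for every \<open>w\<close>, and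
  some \<open>w \<in> {1, i, j, k}\<close> makes \<open>Re(y w)\<close> a \<open>p\<close>-unit.\<close>

lemma qdvd_qconj_mult_trans:
  assumes y: "\<not> qdvd p y" and xy: "qdvd (p ^ m) (qconj x * y)" and yz: "qdvd (p ^ m) (qconj y * z)"
  shows "qdvd (p ^ m) (qconj x * z)"
proof -
  have "\<not> p dvd 2"
  proof
    assume "p dvd 2"
    then have "p \<le> 2" by (rule zdvd_imp_le) simp
    with prime_ge_2_int[OF prime] odd show False by simp
  qed
  then have unit: "coprime (p ^ m) (2 * c)" if "\<not> p dvd c" for c
  proof -
    have "coprime p (2 * c)"
      using that \<open>\<not> p dvd 2\<close> prime by (meson prime_imp_coprime prime_dvd_mult_iff)
    then show ?thesis by simp
  qed
  have "qdvd (p ^ m) (of_int (2 * q0 (y * w)) * (qconj x * z))" for w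
    using qdvd_add[OF qdvd_mult_right[OF qdvd_mult_right[OF xy], of w z]
        qdvd_mult_left[OF yz, of "qconj x * qconj w"]]
    by (simp only: polarization_identity)
  then have reduce: "\<not> p dvd q0 (y * w) \<Longrightarrow> qdvd (p ^ m) (qconj x * z)" for w
    using qdvd_of_int_mult_coprime[OF unit] by blast
  consider "\<not> p dvd q0 (y * 1)" | "\<not> p dvd q0 (y * HQ 0 1 0 0)"
    | "\<not> p dvd q0 (y * HQ 0 0 1 0)" | "\<not> p dvd q0 (y * HQ 0 0 0 1)"
    using y unfolding qdvd_def by auto
  then show ?thesis
    by cases (fact reduce)+
qed

lemma gromov_min_le:
  assumes x: "x \<noteq> 0" and y: "y \<noteq> 0" and z: "z \<noteq> 0"
  shows "min (gromov p x y) (gromov p y z) \<le> gromov p x z"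
proof -
  obtain x' where x': "x = of_int (p ^ vcontent p x) * x'" "\<not> qdvd p x'" "x' \<noteq> 0"
    using primitive_part[OF x] .
  obtain y' where y': "y = of_int (p ^ vcontent p y) * y'" "\<not> qdvd p y'" "y' \<noteq> 0"
    using primitive_part[OF y] .
  obtain z' where z': "z = of_int (p ^ vcontent p z) * z'" "\<not> qdvd p z'" "z' \<noteq> 0"
    using primitive_part[OF z] .
  define m where "m = min (vcontent p (qconj x' * y')) (vcontent p (qconj y' * z'))"
  have "qdvd (p ^ m) (qconj x' * y')" "qdvd (p ^ m) (qconj y' * z')"
    using qdvd_power_iff x' y' z' by (simp_all add: m_def)
  then have "qdvd (p ^ m) (qconj x' * z')"
    by (rule qdvd_qconj_mult_trans[OF y'(2)])
  then have "m \<le> vcontent p (qconj x' * z')"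
    using qdvd_power_iff x' z' by simp
  then show ?thesis
    using gromov_eq_primitive[OF x'(1) y'(1)] gromov_eq_primitive[OF y'(1) z'(1)]
      gromov_eq_primitive[OF x'(1) z'(1)] x' y' z' by (simp add: m_def)
qed

end

section \<open>Ping-pong in the tree\<close>

definition translation_length :: "int \<Rightarrow> hq \<Rightarrow> int" where
  "translation_length p u = tree_dist p u - 2 * cancellation p u u"

context odd_prime_int
begin

lemma gromov_eq_if_less:
  assumes "x \<noteq> 0" "y \<noteq> 0" "z \<noteq> 0" and less: "gromov p x y < gromov p y z"
  shows "gromov p x z = gromov p x y"
proof -
  have "min (gromov p x y) (gromov p y z) \<le> gromov p x z"
    using gromov_min_le assms by blast
  moreover have "min (gromov p x z) (gromov p y z) \<le> gromov p x y"
    using gromov_min_le[of x z y] gromov_commute[of z y] assms by simp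
  ultimately show ?thesis
    using less by linarith
qed

lemma gromov_mult_right_self:
  assumes "s \<noteq> 0" "x \<noteq> 0"
  shows "gromov p s (s * x) = tree_dist p s - cancellation p s x"
  using gromov_eq_tree_dist[of s "s * x"] tree_dist_mult[of s x] tree_dist_of_int_mult[of "qnorm s" x] assms
  by (simp add: qconj_mult_left_cancel)

text \<open>If consecutive factors cancel at most \<open>C\<close> and each moves \<open>v\<^sub>0\<close> by more than \<open>2 C\<close>,
  the path of the product never backtracks: the product moves \<open>v\<^sub>0\<close> at least as far as its first
  factor and in the same direction.\<close>

lemma ping_pong_prod_list:
  assumes "xs \<noteq> []" "\<forall>s\<in>set xs. s \<noteq> 0" "\<forall>s\<in>set xs. tree_dist p s > 2 * C"
    "successively (\<lambda>a b. cancellation p a b \<le> C) xs"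
  shows "prod_list xs \<noteq> 0 \<and> tree_dist p (prod_list xs) \<ge> tree_dist p (hd xs) \<and>
    (\<forall>y. y \<noteq> 0 \<longrightarrow> cancellation p y (hd xs) \<le> C \<longrightarrow> cancellation p y (prod_list xs) = cancellation p y (hd xs))"
  using assms
proof (induction xs rule: induct_list012)
  case (3 s t rest)
  let ?P = "prod_list (t # rest)"
  have s: "s \<noteq> 0" "tree_dist p s > 2 * C" "cancellation p s t \<le> C"
    using "3.prems" by auto
  have IH: "?P \<noteq> 0" "tree_dist p ?P \<ge> tree_dist p t"
    "\<And>y. y \<noteq> 0 \<Longrightarrow> cancellation p y t \<le> C \<Longrightarrow> cancellation p y ?P = cancellation p y t"
    using "3.IH"(2) "3.prems" by auto
  have st: "cancellation p s ?P = cancellation p s t"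
    using IH(3) s by blast
  have "tree_dist p (s * ?P) \<ge> tree_dist p s"
    using tree_dist_mult[OF s(1) IH(1)] st s "3.prems"(3) IH(2) by simp
  moreover have "cancellation p y (s * ?P) = cancellation p y s"
    if y: "y \<noteq> 0" "cancellation p y s \<le> C" for y
  proof -
    have "gromov p (qconj y) s < gromov p s (s * ?P)"
      using gromov_mult_right_self[OF s(1) IH(1)] st s y "3.prems"(3) IH(2)
      by (simp add: gromov_qconj_left)
    then show ?thesis
      using gromov_eq_if_less[of "qconj y" s "s * ?P"] s(1) IH(1) y(1) by (simp add: gromov_qconj_left)
  qed
  ultimately show ?case
    using s(1) IH(1) by simp
qed simp_all

lemma cancellation_power_self:
  assumes s: "s \<noteq> 0" and D: "tree_dist p s > 2 * cancellation p s s" and k: "k \<ge> 1"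
  shows "cancellation p s (s ^ k) = cancellation p s s"
proof -
  have "successively (\<lambda>a b. cancellation p a b \<le> cancellation p s s) (replicate k s)"
    by (induct k) (auto simp: successively_Cons elim: successively.elims)
  then have "cancellation p s (prod_list (replicate k s)) = cancellation p s (hd (replicate k s))"
    using ping_pong_prod_list[of "replicate k s" "cancellation p s s"] s D k by auto
  moreover have "hd (replicate k s) = s"
    using k by (cases k) auto
  ultimately show ?thesis
    by simp
qed

lemma tree_dist_power:
  assumes s: "s \<noteq> 0" and D: "tree_dist p s > 2 * cancellation p s s" and k: "k \<ge> 1"
  shows "tree_dist p (s ^ k) = int k * translation_length p s + 2 * cancellation p s s"
  using k
proof (induct k)
  case (Suc k)
  show ?case
  proof (cases "k = 0")
    case False
    then have "tree_dist p (s * s ^ k) = tree_dist p s + tree_dist p (s ^ k) - 2 * cancellation p s s"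
      using tree_dist_mult[of s "s ^ k"] cancellation_power_self[OF s D] s by simp
    then show ?thesis
      using Suc False by (simp add: translation_length_def algebra_simps)
  qed (simp add: translation_length_def)
qed simp

lemma gromov_powers:
  assumes s: "s \<noteq> 0" and D: "\<And>k. k \<ge> 1 \<Longrightarrow> tree_dist p (s ^ k) = int k * t + 2 * C"
    and k: "1 \<le> j" "j < k"
  shows "gromov p (s ^ j) (s ^ k) = int j * t + C"
proof -
  have "s ^ k = s ^ j * s ^ (k - j)"
    using k by (simp flip: power_add)
  then have "qconj (s ^ j) * s ^ k = of_int (qnorm (s ^ j)) * s ^ (k - j)"
    by (simp only: qconj_mult_left_cancel)
  then have "tree_dist p (qconj (s ^ j) * s ^ k) = int (k - j) * t + 2 * C"
    using tree_dist_of_int_mult[of "qnorm (s ^ j)" "s ^ (k - j)"] D[of "k - j"] s k by simp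
  then have "2 * gromov p (s ^ j) (s ^ k) = (int j * t + 2 * C) + (int k * t + 2 * C) - (int (k - j) * t + 2 * C)"
    using gromov_eq_tree_dist[of "s ^ j" "s ^ k"] D k s by simp
  then show ?thesis
    using k by (simp add: of_nat_diff algebra_simps)
qed

end

section \<open>Powers, scalars and proportionality\<close>

definition scalar :: "hq \<Rightarrow> bool" where
  "scalar x \<longleftrightarrow> q1 x = 0 \<and> q2 x = 0 \<and> q3 x = 0"

definition pure_norm :: "hq \<Rightarrow> int" where
  "pure_norm x = (q1 x)^2 + (q2 x)^2 + (q3 x)^2"

text \<open>\<open>x\<^sup>n = A\<^sub>n + B\<^sub>n (x - Re x)\<close> with \<open>(A\<^sub>n, B\<^sub>n) = pow_coeffs x n\<close>.\<close>

fun pow_coeffs :: "hq \<Rightarrow> nat \<Rightarrow> int \<times> int" where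
  "pow_coeffs x 0 = (1, 0)"
| "pow_coeffs x (Suc n) =
     (q0 x * fst (pow_coeffs x n) - pure_norm x * snd (pow_coeffs x n), fst (pow_coeffs x n) + q0 x * snd (pow_coeffs x n))"

lemma scalar_eq_of_int: "scalar x \<Longrightarrow> x = of_int (q0 x)"
  by (simp add: scalar_def hq_eq_iff)

lemma scalar_qconj_iff [simp]: "scalar (qconj x) \<longleftrightarrow> scalar x"
  by (simp add: scalar_def)

lemma power_eq_pow_coeffs:
  "x ^ n = HQ (fst (pow_coeffs x n)) (snd (pow_coeffs x n) * q1 x) (snd (pow_coeffs x n) * q2 x) (snd (pow_coeffs x n) * q3 x)"
proof (induct n)
  case (Suc n)
  have "x ^ Suc n = x ^ n * x"
    by (simp add: power_commutes)
  then show ?case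
    using Suc by (simp add: hq_eq_iff pure_norm_def power2_eq_square algebra_simps)
qed (simp add: hq_eq_iff)

lemma pow_coeffs_add:
  "pow_coeffs x (m + n) =
    (fst (pow_coeffs x m) * fst (pow_coeffs x n) - pure_norm x * snd (pow_coeffs x m) * snd (pow_coeffs x n),
     fst (pow_coeffs x m) * snd (pow_coeffs x n) + snd (pow_coeffs x m) * fst (pow_coeffs x n))"
  by (induct n) (simp_all add: algebra_simps)

lemma pow_coeffs_parity:
  "odd (q0 x) \<Longrightarrow> even (pure_norm x) \<Longrightarrow> odd (fst (pow_coeffs x n)) \<and> (odd (snd (pow_coeffs x n)) \<longleftrightarrow> odd n)"
  by (induct n) auto

text \<open>Under the parity hypotheses \<open>A\<^sub>n\<close> is odd, and \<open>B\<^sub>n\<close> is odd for odd \<open>n\<close> while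
  \<open>B\<^sub>2\<^sub>n = 2 A\<^sub>n B\<^sub>n\<close>; so no \<open>B\<^sub>n\<close> with \<open>n \<ge> 1\<close> vanishes.\<close>

lemma pow_coeffs_snd_nonzero:
  assumes "odd (q0 x)" "even (pure_norm x)" "n \<ge> 1"
  shows "snd (pow_coeffs x n) \<noteq> 0"
  using assms(3)
proof (induction n rule: less_induct)
  case (less n)
  show ?case
  proof (cases "odd n")
    case False
    then obtain k where k: "n = k + k"
      by (metis evenE mult_2)
    then have "snd (pow_coeffs x k) \<noteq> 0"
      using less by simp
    moreover have "fst (pow_coeffs x k) \<noteq> 0"
      using pow_coeffs_parity[OF assms(1,2), of k] by auto
    ultimately show ?thesis
      unfolding k pow_coeffs_add by simp
  qed (use pow_coeffs_parity[OF assms(1,2), of n] in auto)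
qed

lemma not_scalar_power:
  assumes "odd (q0 x)" "even (pure_norm x)" "n \<ge> 1" "\<not> scalar x"
  shows "\<not> scalar (x ^ n)"
  using pow_coeffs_snd_nonzero[OF assms(1-3)] assms(4) unfolding scalar_def power_eq_pow_coeffs by simp

lemma commute_if_power_commute:
  assumes "odd (q0 x)" "even (pure_norm x)" "n \<ge> 1" "x ^ n * y = y * x ^ n"
  shows "x * y = y * x"
proof -
  have "x ^ n * y - y * x ^ n = of_int (snd (pow_coeffs x n)) * (x * y - y * x)"
    unfolding power_eq_pow_coeffs by (simp add: hq_eq_iff algebra_simps)
  then show ?thesis
    using pow_coeffs_snd_nonzero[OF assms(1-3)] assms(4) by simp
qed

lemma commute_qconj_iff: "qconj x * y = y * qconj x \<longleftrightarrow> x * y = y * x"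
proof -
  have "qconj x * y - y * qconj x = y * x - x * y"
    by (simp add: hq_eq_iff algebra_simps)
  then show ?thesis
    by (metis eq_iff_diff_eq_0 minus_diff_eq neg_equal_0_iff_equal)
qed

lemma not_anticommute:
  assumes "q0 x \<noteq> 0" "q0 y \<noteq> 0"
  shows "x * y \<noteq> - (y * x)"
proof
  assume anti: "x * y = - (y * x)"
  have "2 * q0 y * qnorm x = q0 x * (q0 (x*y) + q0 (y*x)) + q1 x * (q1 (x*y) + q1 (y*x))
      + q2 x * (q2 (x*y) + q2 (y*x)) + q3 x * (q3 (x*y) + q3 (y*x))"
    unfolding hq_mult_sel qnorm_def power2_eq_square by (simp add: algebra_simps)
  also have "\<dots> = 0"
    using anti by (simp add: hq_eq_iff)
  finally show False
    using assms by auto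
qed

text \<open>Proportionality over \<open>\<Q>\<^sup>\<times>\<close>, the kernel of \<open>\<H>(\<Q>)\<^sup>\<times> \<rightarrow> PGL\<^sub>2\<close>.\<close>

definition proportional :: "hq \<Rightarrow> hq \<Rightarrow> bool" where
  "proportional x y \<longleftrightarrow> (\<exists>m n. m \<noteq> 0 \<and> n \<noteq> 0 \<and> of_int m * x = of_int n * y)"

lemma proportional_refl: "proportional x x"
  unfolding proportional_def by (rule exI[of _ 1], rule exI[of _ 1]) simp

lemma proportional_sym: "proportional x y \<Longrightarrow> proportional y x"
  unfolding proportional_def by (metis (no_types))

lemma proportional_trans:
  assumes "proportional x y" "proportional y z"
  shows "proportional x z"
proof -
  obtain m n where 1: "m \<noteq> 0" "n \<noteq> 0" "of_int m * x = of_int n * y"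
    using assms(1) proportional_def by blast
  obtain m' n' where 2: "m' \<noteq> 0" "n' \<noteq> 0" "of_int m' * y = of_int n' * z"
    using assms(2) proportional_def by blast
  have "of_int (m' * m) * x = of_int m' * (of_int n * y)"
    using 1(3) by (simp add: mult.assoc)
  also have "\<dots> = of_int n * (of_int m' * y)"
    by (rule mult_of_int_left_commute)
  also have "\<dots> = of_int (n * n') * z"
    using 2(3) by (simp add: mult.assoc)
  finally show ?thesis
    unfolding proportional_def using 1 2 by (intro exI[of _ "m' * m"] exI[of _ "n * n'"]) simp
qed

lemma proportional_mult:
  assumes "proportional x x'" "proportional y y'"
  shows "proportional (x * y) (x' * y')"
proof -
  obtain m n where 1: "m \<noteq> 0" "n \<noteq> 0" "of_int m * x = of_int n * x'"
    using assms(1) proportional_def by blast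
  obtain m' n' where 2: "m' \<noteq> 0" "n' \<noteq> 0" "of_int m' * y = of_int n' * y'"
    using assms(2) proportional_def by blast
  have scale: "(of_int a * u) * (of_int b * w) = of_int (a * b) * (u * (w :: hq))" for a b u w
    by (simp only: mult.assoc mult_of_int_left_commute[of u] of_int_mult)
  have "of_int (m * m') * (x * y) = (of_int m * x) * (of_int m' * y)"
    by (simp only: scale)
  also have "\<dots> = of_int (n * n') * (x' * y')"
    by (simp only: 1(3) 2(3) scale)
  finally have "of_int (m * m') * (x * y) = of_int (n * n') * (x' * y')" .
  then show ?thesis
    unfolding proportional_def using 1 2 by (intro exI[of _ "m * m'"] exI[of _ "n * n'"]) simp
qed

lemma proportional_mult_left: "proportional x y \<Longrightarrow> proportional (a * x) (a * y)"
  by (rule proportional_mult[OF proportional_refl])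

lemma proportional_mult_right: "proportional x y \<Longrightarrow> proportional (x * a) (y * a)"
  by (rule proportional_mult[OF _ proportional_refl])

lemma proportional_of_int_mult: "c \<noteq> 0 \<Longrightarrow> proportional (of_int c * x) x"
  unfolding proportional_def by (intro exI[of _ 1] exI[of _ c]) simp

lemma proportional_of_int_mult_left_iff: "c \<noteq> 0 \<Longrightarrow> proportional (of_int c * x) y \<longleftrightarrow> proportional x y"
  by (meson proportional_of_int_mult proportional_trans proportional_sym)

lemma proportional_of_int_mult_right_iff: "c \<noteq> 0 \<Longrightarrow> proportional x (of_int c * y) \<longleftrightarrow> proportional x y"
  by (meson proportional_of_int_mult proportional_trans proportional_sym)

lemma proportional_one_iff: "x \<noteq> 0 \<Longrightarrow> proportional x 1 \<longleftrightarrow> scalar x"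
proof
  assume "x \<noteq> 0" "scalar x"
  then have "q0 x \<noteq> 0" "of_int 1 * x = of_int (q0 x) * 1"
    by (auto simp: scalar_def hq_eq_iff)
  then show "proportional x 1"
    unfolding proportional_def by (intro exI[of _ 1] exI[of _ "q0 x"]) simp
next
  assume "proportional x 1"
  then obtain m n where "m \<noteq> 0" "of_int m * x = of_int n * 1"
    unfolding proportional_def by blast
  then show "scalar x"
    by (simp add: scalar_def hq_eq_iff)
qed

lemma proportional_same_norm:
  assumes "proportional x y" "qnorm x = qnorm y" "x \<noteq> 0"
  shows "x = y \<or> x = - y"
proof -
  obtain m n where mn: "m \<noteq> 0" "of_int m * x = of_int n * y"
    using assms(1) proportional_def by blast
  have "m^2 * qnorm x = n^2 * qnorm x"
    using arg_cong[OF mn(2), of qnorm] assms(2) by (simp add: qnorm_mult)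
  then have "m = n \<or> m = - n"
    using assms(3) by (simp add: power2_eq_iff)
  then show ?thesis
  proof
    assume "m = - n"
    then have "of_int m * (x + y) = 0"
      using mn by (simp add: distrib_left)
    then show ?thesis
      using mn(1) by (simp add: eq_neg_iff_add_eq_0)
  qed (use mn in simp)
qed

lemma commute_if_proportional_commuted:
  assumes "proportional (x * y) (y * x)" "q0 x \<noteq> 0" "q0 y \<noteq> 0"
  shows "x * y = y * x"
proof -
  have "x * y \<noteq> 0"
    using assms(2,3) by auto
  moreover have "qnorm (x * y) = qnorm (y * x)"
    by (simp add: qnorm_mult mult.commute)
  ultimately show ?thesis
    using proportional_same_norm[OF assms(1)] not_anticommute[OF assms(2,3)] by blast
qed

lemma scalar_if_proportional_powers:
  assumes x: "x \<noteq> 0" and ab: "a < b" and xab: "proportional (x ^ a) (x ^ b)"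
  shows "scalar (x ^ (b - a))"
proof -
  define N where "N = qnorm (x ^ a)"
  have N: "N \<noteq> 0"
    using x by (simp add: N_def)
  have "x ^ b = x ^ a * x ^ (b - a)"
    using ab by (simp flip: power_add)
  then have "proportional (of_int N * 1) (of_int N * x ^ (b - a))"
    using proportional_mult_left[OF xab, of "qconj (x ^ a)"]
    by (simp only: N_def qconj_mult_self qconj_mult_left_cancel mult_1_right)
  then have "proportional (x ^ (b - a)) 1"
    using proportional_of_int_mult_left_iff[OF N] proportional_of_int_mult_right_iff[OF N] proportional_sym
    by blast
  then show ?thesis
    using proportional_one_iff x by simp
qed

lemma finite_qnorm_le: "finite {y :: hq. qnorm y \<le> B}"
proof -
  have "{y :: hq. qnorm y \<le> B} \<subseteq> (\<lambda>(a,b,c,d). HQ a b c d) ` ({-B..B} \<times> {-B..B} \<times> {-B..B} \<times> {-B..B})"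
  proof
    fix y :: hq assume "y \<in> {y. qnorm y \<le> B}"
    then have n: "qnorm y \<le> B" by simp
    have b: "\<bar>t\<bar> \<le> B" if "t^2 \<le> B" for t :: int
    proof -
      have "\<bar>t\<bar> \<le> t^2"
      proof (cases "t = 0")
        case False
        then have "1 \<le> \<bar>t\<bar>" by simp
        then have "\<bar>t\<bar> * 1 \<le> \<bar>t\<bar> * \<bar>t\<bar>" by (intro mult_left_mono) auto
        then show ?thesis by (simp add: power2_eq_square abs_mult_self_eq)
      qed simp
      with that show ?thesis by simp
    qed
    have nn: "0 \<le> (q0 y)^2" "0 \<le> (q1 y)^2" "0 \<le> (q2 y)^2" "0 \<le> (q3 y)^2" by simp_all
    have "(q0 y)^2 \<le> B" "(q1 y)^2 \<le> B" "(q2 y)^2 \<le> B" "(q3 y)^2 \<le> B"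
      using n nn unfolding qnorm_def by linarith+
    then have "\<bar>q0 y\<bar> \<le> B" "\<bar>q1 y\<bar> \<le> B" "\<bar>q2 y\<bar> \<le> B" "\<bar>q3 y\<bar> \<le> B" using b by auto
    then show "y \<in> (\<lambda>(a,b,c,d). HQ a b c d) ` ({-B..B} \<times> {-B..B} \<times> {-B..B} \<times> {-B..B})"
      by (intro image_eqI[of _ _ "(q0 y, q1 y, q2 y, q3 y)"]) (auto simp: hq_eq_iff)
  qed
  then show ?thesis by (rule finite_subset) simp
qed

section \<open>The lattice \<open>\<Gamma>\<close>\<close>

definition gamma_parity :: "hq \<Rightarrow> bool" where
  "gamma_parity x \<longleftrightarrow> odd (q0 x) \<and> even (q1 x) \<and> (even (q2 x) \<longleftrightarrow> even (q3 x))"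

lemma gamma_parity_mult: "gamma_parity x \<Longrightarrow> gamma_parity y \<Longrightarrow> gamma_parity (x * y)"
  unfolding gamma_parity_def hq_mult_sel by auto

lemma gamma_parity_qnorm_mod_4:
  assumes "gamma_parity x"
  shows "qnorm x mod 4 = (if even (q2 x) then 1 else 3)"
proof -
  obtain a b where ab: "q0 x = 2 * a + 1" "q1 x = 2 * b"
    using assms unfolding gamma_parity_def by (meson evenE oddE)
  show ?thesis
  proof (cases "even (q2 x)")
    case True
    then obtain c d where "q2 x = 2 * c" "q3 x = 2 * d"
      using assms unfolding gamma_parity_def by (meson evenE)
    then have "qnorm x = 4 * (a^2 + a + b^2 + c^2 + d^2) + 1"
      using ab by (simp add: qnorm_def power2_eq_square algebra_simps)
    then show ?thesis
      using True by presburger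
  next
    case False
    then obtain c d where "q2 x = 2 * c + 1" "q3 x = 2 * d + 1"
      using assms unfolding gamma_parity_def by (meson oddE)
    then have "qnorm x = 4 * (a^2 + a + b^2 + c^2 + c + d^2 + d) + 3"
      using ab by (simp add: qnorm_def power2_eq_square algebra_simps)
    then show ?thesis
      using False by presburger
  qed
qed

lemma psi_class_eq: "psi_class p l x = {y \<in> Gamma_tilde p l. proportional x y}"
  unfolding psi_class_def proportional_def qscale_eq_of_int_mult by blast

lemma carrier_Gamma_grp: "carrier (Gamma_grp p l) = psi_class p l ` Gamma_tilde p l"
  by (simp add: Gamma_grp_def)

lemma mult_Gamma_grp: "A \<otimes>\<^bsub>Gamma_grp p l\<^esub> B = psi_class p l ((SOME x. x \<in> A) * (SOME y. y \<in> B))"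
  by (simp add: Gamma_grp_def qmult_eq_times)

lemma one_Gamma_grp: "\<one>\<^bsub>Gamma_grp p l\<^esub> = psi_class p l 1"
  by (simp add: Gamma_grp_def qone_eq_one)

lemma psi_class_self: "x \<in> Gamma_tilde p l \<Longrightarrow> x \<in> psi_class p l x"
  by (simp add: psi_class_eq proportional_refl)

lemma psi_class_eqI: "proportional x y \<Longrightarrow> psi_class p l x = psi_class p l y"
  unfolding psi_class_eq by (meson proportional_trans proportional_sym)

lemma psi_class_eq_iff: "x \<in> Gamma_tilde p l \<Longrightarrow> psi_class p l x = psi_class p l y \<longleftrightarrow> proportional x y"
  by (metis (mono_tags, lifting) mem_Collect_eq proportional_refl proportional_sym psi_class_eq psi_class_eqI)

lemma psi_class_mult:
  assumes "x \<in> Gamma_tilde p l" "y \<in> Gamma_tilde p l"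
  shows "psi_class p l x \<otimes>\<^bsub>Gamma_grp p l\<^esub> psi_class p l y = psi_class p l (x * y)"
proof -
  have "(SOME z. z \<in> psi_class p l x) \<in> psi_class p l x" "(SOME z. z \<in> psi_class p l y) \<in> psi_class p l y"
    using someI[where P = "\<lambda>z. z \<in> psi_class p l x", OF psi_class_self[OF assms(1)]]
      someI[where P = "\<lambda>z. z \<in> psi_class p l y", OF psi_class_self[OF assms(2)]] .
  then have "proportional (x * y) ((SOME z. z \<in> psi_class p l x) * (SOME z. z \<in> psi_class p l y))"
    by (auto intro: proportional_mult simp: psi_class_eq)
  then show ?thesis
    unfolding mult_Gamma_grp by (rule psi_class_eqI[symmetric])
qed

locale Gamma_params =
  fixes p l :: int
  assumes odd_p: "odd p" and odd_l: "odd l"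
begin

lemma Gamma_tilde_iff: "x \<in> Gamma_tilde p l \<longleftrightarrow> (\<exists>r s::nat. qnorm x = p ^ r * l ^ s) \<and> gamma_parity x"
proof
  assume x: "x \<in> Gamma_tilde p l"
  then obtain r s :: nat where rs: "qnorm x = p ^ r * l ^ s"
    unfolding Gamma_tilde_def by blast
  then have "odd (qnorm x)"
    using odd_p odd_l by simp
  then have "qnorm x mod 4 = 1 \<or> qnorm x mod 4 = 3"
    by presburger
  then have "gamma_parity x"
    using x unfolding Gamma_tilde_def gamma_parity_def by auto
  with rs show "(\<exists>r s::nat. qnorm x = p ^ r * l ^ s) \<and> gamma_parity x"
    by blast
next
  assume "(\<exists>r s::nat. qnorm x = p ^ r * l ^ s) \<and> gamma_parity x"
  then show "x \<in> Gamma_tilde p l"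
    unfolding Gamma_tilde_def using gamma_parity_qnorm_mod_4[of x]
    by (auto simp: gamma_parity_def split: if_splits)
qed

lemma Gamma_tilde_mult:
  assumes "x \<in> Gamma_tilde p l" "y \<in> Gamma_tilde p l"
  shows "x * y \<in> Gamma_tilde p l"
proof -
  obtain r s r' s' :: nat where "qnorm x = p ^ r * l ^ s" "qnorm y = p ^ r' * l ^ s'"
    using assms Gamma_tilde_iff by blast
  then have "qnorm (x * y) = p ^ (r + r') * l ^ (s + s')"
    by (simp add: qnorm_mult power_add)
  then show ?thesis
    using assms gamma_parity_mult Gamma_tilde_iff by blast
qed

lemma Gamma_tilde_qconj: "x \<in> Gamma_tilde p l \<Longrightarrow> qconj x \<in> Gamma_tilde p l"
  unfolding Gamma_tilde_iff by (simp add: gamma_parity_def)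

lemma Gamma_tilde_one: "1 \<in> Gamma_tilde p l"
  unfolding Gamma_tilde_iff by (auto simp: gamma_parity_def intro!: exI[of _ 0])

lemma Gamma_tilde_power: "x \<in> Gamma_tilde p l \<Longrightarrow> x ^ n \<in> Gamma_tilde p l"
  by (induct n) (auto simp: Gamma_tilde_one Gamma_tilde_mult)

lemma Gamma_tilde_q0_odd: "x \<in> Gamma_tilde p l \<Longrightarrow> odd (q0 x)"
  unfolding Gamma_tilde_iff gamma_parity_def by blast

lemma Gamma_tilde_q0_nonzero: "x \<in> Gamma_tilde p l \<Longrightarrow> q0 x \<noteq> 0"
  using Gamma_tilde_q0_odd by fastforce

lemma Gamma_tilde_nonzero: "x \<in> Gamma_tilde p l \<Longrightarrow> x \<noteq> 0"
  using Gamma_tilde_q0_odd by fastforce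

lemma Gamma_tilde_pure_norm_even: "x \<in> Gamma_tilde p l \<Longrightarrow> even (pure_norm x)"
proof -
  assume x: "x \<in> Gamma_tilde p l"
  then have "odd (qnorm x)"
    using odd_p odd_l by (auto simp: Gamma_tilde_iff)
  moreover have "qnorm x = (q0 x)^2 + pure_norm x"
    by (simp add: qnorm_def pure_norm_def)
  ultimately show ?thesis
    using Gamma_tilde_q0_odd[OF x] by auto
qed

lemma not_scalar_power_Gamma_tilde:
  "x \<in> Gamma_tilde p l \<Longrightarrow> \<not> scalar x \<Longrightarrow> n \<ge> 1 \<Longrightarrow> \<not> scalar (x ^ n)"
  using not_scalar_power Gamma_tilde_q0_odd Gamma_tilde_pure_norm_even by blast

lemma commute_if_power_commute_Gamma_tilde:
  "x \<in> Gamma_tilde p l \<Longrightarrow> n \<ge> 1 \<Longrightarrow> x ^ n * y = y * x ^ n \<Longrightarrow> x * y = y * x"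
  using commute_if_power_commute Gamma_tilde_q0_odd Gamma_tilde_pure_norm_even by blast

lemma psi_class_inverse:
  assumes "x \<in> Gamma_tilde p l"
  shows "psi_class p l (qconj x) \<otimes>\<^bsub>Gamma_grp p l\<^esub> psi_class p l x = \<one>\<^bsub>Gamma_grp p l\<^esub>"
proof -
  have "psi_class p l (qconj x) \<otimes>\<^bsub>Gamma_grp p l\<^esub> psi_class p l x = psi_class p l (of_int (qnorm x) * 1)"
    using assms psi_class_mult Gamma_tilde_qconj qconj_mult_self by simp
  also have "\<dots> = \<one>\<^bsub>Gamma_grp p l\<^esub>"
    unfolding one_Gamma_grp using assms Gamma_tilde_nonzero
    by (intro psi_class_eqI proportional_of_int_mult) simp
  finally show ?thesis .
qed

lemma group_Gamma_grp: "group (Gamma_grp p l)"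
proof (rule groupI)
  show "\<one>\<^bsub>Gamma_grp p l\<^esub> \<in> carrier (Gamma_grp p l)"
    unfolding one_Gamma_grp carrier_Gamma_grp using Gamma_tilde_one by simp
next
  fix A B C
  assume "A \<in> carrier (Gamma_grp p l)" "B \<in> carrier (Gamma_grp p l)" "C \<in> carrier (Gamma_grp p l)"
  then obtain x y z where "x \<in> Gamma_tilde p l" "y \<in> Gamma_tilde p l" "z \<in> Gamma_tilde p l"
    "A = psi_class p l x" "B = psi_class p l y" "C = psi_class p l z"
    unfolding carrier_Gamma_grp by blast
  then show "A \<otimes>\<^bsub>Gamma_grp p l\<^esub> B \<in> carrier (Gamma_grp p l)"
    and "A \<otimes>\<^bsub>Gamma_grp p l\<^esub> B \<otimes>\<^bsub>Gamma_grp p l\<^esub> C = A \<otimes>\<^bsub>Gamma_grp p l\<^esub> (B \<otimes>\<^bsub>Gamma_grp p l\<^esub> C)"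
    by (simp_all add: psi_class_mult Gamma_tilde_mult carrier_Gamma_grp mult.assoc)
next
  fix A
  assume "A \<in> carrier (Gamma_grp p l)"
  then obtain x where x: "x \<in> Gamma_tilde p l" "A = psi_class p l x"
    unfolding carrier_Gamma_grp by blast
  then show "\<one>\<^bsub>Gamma_grp p l\<^esub> \<otimes>\<^bsub>Gamma_grp p l\<^esub> A = A"
    unfolding one_Gamma_grp using psi_class_mult Gamma_tilde_one by simp
  show "\<exists>B\<in>carrier (Gamma_grp p l). B \<otimes>\<^bsub>Gamma_grp p l\<^esub> A = \<one>\<^bsub>Gamma_grp p l\<^esub>"
    using x psi_class_inverse Gamma_tilde_qconj carrier_Gamma_grp by blast
qed

lemma psi_class_in_carrier: "x \<in> Gamma_tilde p l \<Longrightarrow> psi_class p l x \<in> carrier (Gamma_grp p l)"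
  unfolding carrier_Gamma_grp by simp

lemma inv_psi_class:
  "x \<in> Gamma_tilde p l \<Longrightarrow> inv\<^bsub>Gamma_grp p l\<^esub> (psi_class p l x) = psi_class p l (qconj x)"
  by (rule group.inv_equality[OF group_Gamma_grp psi_class_inverse])
    (simp_all add: psi_class_in_carrier Gamma_tilde_qconj)

lemma pow_psi_class:
  "x \<in> Gamma_tilde p l \<Longrightarrow> psi_class p l x [^]\<^bsub>Gamma_grp p l\<^esub> (n::nat) = psi_class p l (x ^ n)"
  by (induct n) (simp_all add: one_Gamma_grp psi_class_mult Gamma_tilde_power power_commutes)

lemma psi_class_eq_one_iff: "x \<in> Gamma_tilde p l \<Longrightarrow> psi_class p l x = \<one>\<^bsub>Gamma_grp p l\<^esub> \<longleftrightarrow> scalar x"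
  unfolding one_Gamma_grp by (simp add: psi_class_eq_iff proportional_one_iff Gamma_tilde_nonzero)

end

section \<open>Two commuting elements without relations generate \<open>\<Z>\<^sup>2\<close>\<close>

context group
begin

lemma int_pow_commute_right:
  assumes xy: "x \<otimes> y = y \<otimes> x" and x: "x \<in> carrier G" and y: "y \<in> carrier G"
  shows "x [^] (i::int) \<otimes> y = y \<otimes> x [^] i"
proof (cases i rule: int_cases)
  case (nonneg n)
  then show ?thesis
    using group_commutes_pow[OF xy x y, of n] by (simp add: int_pow_int)
next
  case (neg n)
  define z where "z = x [^] Suc n"
  have z: "z \<in> carrier G" "z \<otimes> y = y \<otimes> z"
    using group_commutes_pow[OF xy x y, of "Suc n"] x by (simp_all add: z_def)
  have "inv z \<otimes> y = inv z \<otimes> (y \<otimes> z) \<otimes> inv z"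
    using z(1) y by (simp add: m_assoc)
  also have "\<dots> = inv z \<otimes> (z \<otimes> y) \<otimes> inv z"
    by (simp only: z(2))
  also have "\<dots> = y \<otimes> inv z"
    using z(1) y by (simp flip: m_assoc)
  moreover have "x [^] i = inv z"
    unfolding z_def using neg int_pow_neg_int[OF x, of "Suc n"] by simp
  ultimately show ?thesis
    by simp
qed

lemma int_pow_commute:
  assumes "x \<otimes> y = y \<otimes> x" "x \<in> carrier G" "y \<in> carrier G"
  shows "x [^] (i::int) \<otimes> y [^] (j::int) = y [^] j \<otimes> x [^] i"
  using int_pow_commute_right[of y x j] int_pow_commute_right[of x "y [^] j" i] assms by simp

lemma int_pow_pair_mult:
  assumes ab: "a \<otimes> b = b \<otimes> a" and a: "a \<in> carrier G" and b: "b \<in> carrier G"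
  shows "a [^] (m + m') \<otimes> b [^] (n + n') = (a [^] (m::int) \<otimes> b [^] (n::int)) \<otimes> (a [^] m' \<otimes> b [^] n')"
proof -
  have "a [^] (m + m') \<otimes> b [^] (n + n') = a [^] m \<otimes> ((a [^] m' \<otimes> b [^] n) \<otimes> b [^] n')"
    using a b by (simp add: int_pow_mult m_assoc)
  also have "a [^] m' \<otimes> b [^] n = b [^] n \<otimes> a [^] m'"
    by (rule int_pow_commute[OF ab a b])
  finally show ?thesis
    using a b by (simp add: m_assoc)
qed

lemma generate_commuting_pair:
  assumes ab: "a \<otimes> b = b \<otimes> a" and a: "a \<in> carrier G" and b: "b \<in> carrier G"
  shows "generate G {a, b} = range (\<lambda>(m::int, n::int). a [^] m \<otimes> b [^] n)"
proof
  let ?f = "\<lambda>(m::int, n::int). a [^] m \<otimes> b [^] n"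
  have sub: "subgroup (generate G {a, b}) G"
    using a b by (intro generate_is_subgroup) auto
  show "range ?f \<subseteq> generate G {a, b}"
    using subgroup_int_pow_closed[OF sub] subgroup.m_closed[OF sub] generate.incl[of _ "{a, b}" G] by auto
  show "generate G {a, b} \<subseteq> range ?f"
  proof
    fix h
    assume "h \<in> generate G {a, b}"
    then show "h \<in> range ?f"
    proof (induction rule: generate.induct)
      case one
      show ?case by (rule range_eqI[of _ _ "(0, 0)"]) simp
    next
      case (incl h)
      have "?f (1, 0) = a" "?f (0, 1) = b"
        using a b by simp_all
      then show ?case
        using incl by (metis insert_iff singletonD rangeI)
    next
      case (inv h)
      have "?f (- 1, 0) = inv a" "?f (0, - 1) = inv b"
        using a b by (simp_all add: int_pow_neg)
      then show ?case
        using inv by (metis insert_iff singletonD rangeI)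
    next
      case (eng h1 h2)
      then obtain m n m' n' where "h1 = ?f (m, n)" "h2 = ?f (m', n')"
        by auto
      then have "h1 \<otimes> h2 = ?f (m + m', n + n')"
        using int_pow_pair_mult[OF ab a b, of m m' n n'] by simp
      then show ?case
        by (rule range_eqI)
    qed
  qed
qed

lemma iso_integer_group_squared_if_independent:
  assumes a: "a \<in> carrier G" and b: "b \<in> carrier G" and ab: "a \<otimes> b = b \<otimes> a"
    and indep: "\<And>(m::int) (n::int). a [^] m \<otimes> b [^] n = \<one> \<Longrightarrow> m = 0 \<and> n = 0"
  shows "G\<lparr>carrier := generate G {a, b}\<rparr> \<cong> integer_group \<times>\<times> integer_group"
proof -
  define f where "f = (\<lambda>(m::int, n::int). a [^] m \<otimes> b [^] n)"
  have gen: "generate G {a, b} = range f"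
    unfolding f_def by (rule generate_commuting_pair[OF ab a b])
  have f_mult: "f (m + m', n + n') = f (m, n) \<otimes> f (m', n')" for m m' n n'
    unfolding f_def using int_pow_pair_mult[OF ab a b] by simp
  have hom: "f \<in> hom (integer_group \<times>\<times> integer_group) (G\<lparr>carrier := generate G {a, b}\<rparr>)"
    unfolding hom_def gen using f_mult by (auto simp: DirProd_def integer_group_def)
  have "inj f"
  proof (rule injI)
    fix x y
    assume "f x = f y"
    obtain m n m' n' where xy: "x = (m, n)" "y = (m', n')"
      by fastforce
    have "f (m - m', n - n') \<otimes> f (m', n') = f (m', n')"
      using f_mult[of "m - m'" m' "n - n'" n'] \<open>f x = f y\<close> xy by simp
    moreover have "f z \<in> carrier G" for z
      using a b by (auto simp: f_def split: prod.splits)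
    ultimately have "f (m - m', n - n') = \<one>"
      using r_cancel_one by blast
    then show "x = y"
      using indep[of "m - m'" "n - n'"] xy by (simp add: f_def)
  qed
  then have "bij_betw f (carrier (integer_group \<times>\<times> integer_group)) (carrier (G\<lparr>carrier := generate G {a, b}\<rparr>))"
    by (simp add: bij_betw_def gen)
  then have "integer_group \<times>\<times> integer_group \<cong> G\<lparr>carrier := generate G {a, b}\<rparr>"
    using hom by (auto simp: is_iso_def iso_def)
  then show ?thesis
    by (rule group.iso_sym[OF DirProd_group[OF group_integer_group group_integer_group]])
qed

end

section \<open>Elements of \<open>\<Gamma>\<^sub>p\<close> and \<open>\<Gamma>\<^sub>l\<close>\<close>

definition qpow_int :: "hq \<Rightarrow> int \<Rightarrow> hq" where
  "qpow_int x m = (if 0 \<le> m then x ^ nat m else qconj x ^ nat (- m))"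

lemma qnorm_qpow_int: "qnorm (qpow_int x m) = qnorm x ^ nat \<bar>m\<bar>"
  by (simp add: qpow_int_def qnorm_power)

context Gamma_params
begin

lemma generate_psi_class_norm_power:
  assumes T: "T \<subseteq> Gamma_tilde p l" "\<forall>x\<in>T. qnorm x = q"
    and h: "h \<in> generate (Gamma_grp p l) (psi_class p l ` T)"
  shows "\<exists>x \<in> Gamma_tilde p l. h = psi_class p l x \<and> (\<exists>k::nat. qnorm x = q ^ k)"
  using h
proof (induction rule: generate.induct)
  case one
  show ?case
    by (intro bexI[of _ 1]) (auto simp: one_Gamma_grp Gamma_tilde_one intro: exI[of _ 0])
next
  case (incl h)
  then obtain x where "x \<in> T" "h = psi_class p l x"
    by blast
  then show ?case
    using T by (intro bexI[of _ x]) (auto intro: exI[of _ 1])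
next
  case (inv h)
  then obtain x where "x \<in> T" "h = psi_class p l x"
    by blast
  then show ?case
    using T inv_psi_class Gamma_tilde_qconj by (intro bexI[of _ "qconj x"]) (auto intro: exI[of _ 1])
next
  case (eng h1 h2)
  then obtain x1 x2 k1 k2 where "x1 \<in> Gamma_tilde p l" "h1 = psi_class p l x1" "qnorm x1 = q ^ k1"
    "x2 \<in> Gamma_tilde p l" "h2 = psi_class p l x2" "qnorm x2 = q ^ k2"
    by blast
  then show ?case
    using psi_class_mult Gamma_tilde_mult
    by (intro bexI[of _ "x1 * x2"]) (auto simp: qnorm_mult power_add intro: exI[of _ "k1 + k2"])
qed

lemma Gamma_p_representative:
  assumes "g \<in> Gamma_p p l"
  obtains x r where "x \<in> Gamma_tilde p l" "g = psi_class p l x" "qnorm x = p ^ r"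
proof -
  have "A_tilde p l \<subseteq> Gamma_tilde p l" "\<forall>x\<in>A_tilde p l. qnorm x = p"
    by (auto simp: A_tilde_def)
  then show ?thesis
    using generate_psi_class_norm_power assms that unfolding Gamma_p_def by blast
qed

lemma Gamma_l_representative:
  assumes "g \<in> Gamma_l p l"
  obtains x s where "x \<in> Gamma_tilde p l" "g = psi_class p l x" "qnorm x = l ^ s"
proof -
  have "B_tilde p l \<subseteq> Gamma_tilde p l" "\<forall>x\<in>B_tilde p l. qnorm x = l"
    by (auto simp: B_tilde_def)
  then show ?thesis
    using generate_psi_class_norm_power assms that unfolding Gamma_l_def by blast
qed

lemma Gamma_tilde_qpow_int: "x \<in> Gamma_tilde p l \<Longrightarrow> qpow_int x m \<in> Gamma_tilde p l"
  by (simp add: qpow_int_def Gamma_tilde_power Gamma_tilde_qconj)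

lemma int_pow_psi_class:
  assumes x: "x \<in> Gamma_tilde p l"
  shows "psi_class p l x [^]\<^bsub>Gamma_grp p l\<^esub> (m::int) = psi_class p l (qpow_int x m)"
proof (cases "0 \<le> m")
  case True
  then show ?thesis
    unfolding qpow_int_def int_pow_def2 using pow_psi_class[OF x] by simp
next
  case False
  have "inv\<^bsub>Gamma_grp p l\<^esub> (psi_class p l (x ^ nat (- m))) = psi_class p l (qconj x ^ nat (- m))"
    using inv_psi_class[OF Gamma_tilde_power[OF x]] by (simp add: qconj_power)
  then show ?thesis
    using False unfolding qpow_int_def int_pow_def2 using pow_psi_class[OF x] by simp
qed

lemma qpow_int_scalar_imp_zero:
  assumes x: "x \<in> Gamma_tilde p l" "\<not> scalar x" and scalar: "scalar (qpow_int x m)"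
  shows "m = 0"
proof (rule ccontr)
  assume "m \<noteq> 0"
  then have "\<not> scalar (x ^ nat m)" if "0 \<le> m"
    using that not_scalar_power_Gamma_tilde[OF x] by simp
  moreover have "\<not> scalar (qconj x ^ nat (- m))" if "\<not> 0 \<le> m"
    using that not_scalar_power_Gamma_tilde[OF Gamma_tilde_qconj[OF x(1)]] x(2) by simp
  ultimately show False
    using scalar by (auto simp: qpow_int_def split: if_splits)
qed

end

locale two_odd_primes = odd_prime_int p + Gamma_params p l for p l +
  assumes prime_l: "Factorial_Ring.prime l" and distinct: "p \<noteq> l"
begin

lemma not_dvd_power_other: "\<not> p dvd l ^ k"
  using prime prime_l distinct by (metis prime_dvd_power primes_dvd_imp_eq)

lemma vnorm_eq:
  assumes "qnorm x = p ^ R * l ^ s"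
  shows "vnorm p x = R"
proof -
  have "multiplicity p (p ^ R * l ^ s) = multiplicity p (p ^ R) + multiplicity p (l ^ s)"
    by (rule prime_elem_multiplicity_mult_distrib) (use prime prime_l in auto)
  also have "\<dots> = R"
    using prime prime_l distinct nonzero not_unit
    by (simp add: multiplicity_distinct_prime_power multiplicity_same_power)
  finally show ?thesis
    using assms by (simp add: vnorm_def)
qed

text \<open>The vertex \<open>x v\<^sub>0\<close> is represented by a quaternion whose \<open>p\<close>-part of the norm is
  \<open>p\<^sup>d\<close>, where \<open>d\<close> is its distance from \<open>v\<^sub>0\<close>.\<close>

lemma primitive_part_qnorm:
  assumes x: "x = of_int (p ^ vcontent p x) * y" "x \<noteq> 0" and n: "qnorm x = p ^ R * l ^ s"
  shows "qnorm y = p ^ nat (tree_dist p x) * l ^ s"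
proof -
  define c where "c = vcontent p x"
  have le: "2 * c \<le> R"
    using vcontent_le_vnorm[OF x(2)] vnorm_eq[OF n] by (simp add: c_def)
  have "qnorm x = p ^ (2 * c) * qnorm y"
    by (subst x(1)) (simp only: c_def qnorm_mult qnorm_of_int power_mult[symmetric] mult.commute[of 2])
  moreover have "p ^ R = p ^ (2 * c) * p ^ (R - 2 * c)"
    using le by (simp flip: power_add)
  ultimately have "p ^ (2 * c) * qnorm y = p ^ (2 * c) * (p ^ (R - 2 * c) * l ^ s)"
    using n by (simp only: mult.assoc)
  moreover have "nat (tree_dist p x) = R - 2 * c"
    using le vnorm_eq[OF n] by (simp add: tree_dist_def c_def)
  ultimately show ?thesis
    using nonzero by simp
qed

lemma exists_proportional_qnorm:
  assumes x: "x \<noteq> 0" and n: "qnorm x = p ^ R * l ^ s"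
  obtains y where "proportional x y" "qnorm y = p ^ nat (tree_dist p x) * l ^ s"
proof -
  obtain y where y: "x = of_int (p ^ vcontent p x) * y"
    using primitive_part[OF x] by blast
  have "proportional x y"
    by (subst y) (rule proportional_of_int_mult, simp add: nonzero)
  with primitive_part_qnorm[OF y x n] that show ?thesis
    by blast
qed

text \<open>\<open>\<Gamma>\<close> acts freely on the tree.\<close>

lemma scalar_if_tree_dist_eq_0:
  assumes x: "x \<in> Gamma_tilde p l" and n: "qnorm x = p ^ R" and D: "tree_dist p x = 0"
  shows "scalar x"
proof -
  have x0: "x \<noteq> 0"
    using Gamma_tilde_nonzero[OF x] .
  obtain y where y: "x = of_int (p ^ vcontent p x) * y"
    using primitive_part[OF x0] by blast
  have ny: "qnorm y = 1"
    using primitive_part_qnorm[OF y x0, of R 0] n D by simp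
  have "q0 x = p ^ vcontent p x * q0 y"
    by (subst y) (simp del: of_int_power)
  then have "q0 y \<noteq> 0"
    using Gamma_tilde_q0_odd[OF x] by auto
  then have "1 * 1 \<le> \<bar>q0 y\<bar> * \<bar>q0 y\<bar>"
    by (intro mult_mono) auto
  then have "(q0 y)^2 \<ge> 1"
    by (simp add: power2_eq_square abs_mult_self_eq)
  then have "(q1 y)^2 + (q2 y)^2 + (q3 y)^2 = 0"
    using ny unfolding qnorm_def by (smt (verit) zero_le_power2)
  then have "q1 y = 0 \<and> q2 y = 0 \<and> q3 y = 0"
    by (simp add: add_nonneg_eq_0_iff)
  then show ?thesis
    by (subst y) (simp add: scalar_def del: of_int_power)
qed

lemma not_dvd_qnorm_Gamma_l: "qnorm x = l ^ s \<Longrightarrow> \<not> p dvd qnorm x"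
  using not_dvd_power_other by simp

lemma psi_class_pow_independent:
  assumes a: "a \<in> Gamma_tilde p l" "\<not> scalar a" "qnorm a = p ^ r"
    and b: "b \<in> Gamma_tilde p l" "\<not> scalar b" "qnorm b = l ^ s"
    and rel: "psi_class p l a [^]\<^bsub>Gamma_grp p l\<^esub> (m::int) \<otimes>\<^bsub>Gamma_grp p l\<^esub> psi_class p l b [^]\<^bsub>Gamma_grp p l\<^esub> (n::int)
      = \<one>\<^bsub>Gamma_grp p l\<^esub>"
  shows "m = 0 \<and> n = 0"
proof -
  let ?a = "qpow_int a m" and ?b = "qpow_int b n"
  have ab: "?a \<in> Gamma_tilde p l" "?b \<in> Gamma_tilde p l" "?a * ?b \<in> Gamma_tilde p l"
    using Gamma_tilde_mult Gamma_tilde_qpow_int a b by blast+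
  have "psi_class p l (?a * ?b) = \<one>\<^bsub>Gamma_grp p l\<^esub>"
    using rel by (simp add: int_pow_psi_class a b psi_class_mult ab)
  then have sc: "scalar (?a * ?b)"
    using psi_class_eq_one_iff[OF ab(3)] by simp
  have "tree_dist p (?a * ?b) = 0"
    by (subst scalar_eq_of_int[OF sc]) (rule tree_dist_of_int[OF Gamma_tilde_q0_nonzero[OF ab(3)]])
  moreover have "\<not> p dvd qnorm ?b"
    using not_dvd_qnorm_Gamma_l[of ?b "s * nat \<bar>n\<bar>"] b by (simp add: qnorm_qpow_int power_mult)
  ultimately have "tree_dist p ?a = 0"
    using tree_dist_mult_unit[of ?b ?a] Gamma_tilde_nonzero[OF ab(1)] by simp
  then have "scalar ?a"
    using scalar_if_tree_dist_eq_0[OF ab(1), of "r * nat \<bar>m\<bar>"] a by (simp add: qnorm_qpow_int power_mult)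
  then have m: "m = 0"
    using qpow_int_scalar_imp_zero a by blast
  then have "scalar ?b"
    using sc by (simp add: qpow_int_def)
  then show ?thesis
    using m qpow_int_scalar_imp_zero b by blast
qed

lemma commuting_generate_iso:
  assumes a: "a \<in> Gamma_tilde p l" "\<not> scalar a" "qnorm a = p ^ r"
    and b: "b \<in> Gamma_tilde p l" "\<not> scalar b" "qnorm b = l ^ s"
    and ab: "a * b = b * a"
  shows "(Gamma_grp p l)\<lparr>carrier := generate (Gamma_grp p l) {psi_class p l a, psi_class p l b}\<rparr>
           \<cong> integer_group \<times>\<times> integer_group"
proof (rule group.iso_integer_group_squared_if_independent[OF group_Gamma_grp])
  show "psi_class p l a \<otimes>\<^bsub>Gamma_grp p l\<^esub> psi_class p l b = psi_class p l b \<otimes>\<^bsub>Gamma_grp p l\<^esub> psi_class p l a"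
    using a b ab by (simp add: psi_class_mult)
qed (use a b psi_class_in_carrier psi_class_pow_independent in auto)

end

section \<open>Hyperbolic elements\<close>

lemma exists_proportional_pair:
  assumes S: "finite S" and f: "\<forall>k\<in>{1..card S + 1}. \<exists>y\<in>S. proportional (f k) y"
  shows "\<exists>i j. 1 \<le> i \<and> i < j \<and> j \<le> card S + 1 \<and> proportional (f i) (f j)"
proof -
  define g where "g k = (SOME y. y \<in> S \<and> proportional (f k) y)" for k
  have g: "g k \<in> S \<and> proportional (f k) (g k)" if "k \<in> {1..card S + 1}" for k
  proof -
    have "\<exists>y. y \<in> S \<and> proportional (f k) y"
      using f that by blast
    then show ?thesis
      unfolding g_def by (rule someI_ex)
  qed
  then have "g ` {1..card S + 1} \<subseteq> S"
    by blast
  then have "\<not> inj_on g {1..card S + 1}"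
    using card_inj_on_le[OF _ _ S, of g "{1..card S + 1}"] by auto
  then obtain i j where ij: "i \<in> {1..card S + 1}" "j \<in> {1..card S + 1}" "i < j" "g i = g j"
    unfolding inj_on_def by (metis linorder_neqE_nat)
  then have "proportional (f i) (f j)"
    using g[of i] g[of j] proportional_sym proportional_trans by metis
  then show ?thesis
    using ij by auto
qed

lemma (in prime_int) tree_dist_power_of_two_bounded:
  assumes a: "a \<noteq> 0" and not_hyp: "\<And>N. N \<ge> 1 \<Longrightarrow> tree_dist p (a ^ N) \<le> 2 * cancellation p (a ^ N) (a ^ N)"
  shows "tree_dist p (a ^ (2 ^ j)) \<le> tree_dist p a"
proof (induct j)
  case (Suc j)
  have "a ^ (2 * 2 ^ j) = a ^ 2 ^ j * a ^ 2 ^ j"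
    by (simp add: mult_2 power_add)
  then have "tree_dist p (a ^ (2 * 2 ^ j)) \<le> tree_dist p (a ^ (2 ^ j))"
    using tree_dist_mult[of "a ^ 2 ^ j" "a ^ 2 ^ j"] not_hyp[of "2 ^ j"] a by simp
  then show ?case
    using Suc by simp
qed simp

context two_odd_primes
begin

text \<open>A nontrivial element of \<open>\<Gamma>\<^sub>p\<close> is hyperbolic: otherwise the distances of the vertices
  \<open>a\<^bsup>2^j\<^esup> v\<^sub>0\<close> stay bounded, so two of them are represented by proportional
  quaternions, and \<open>\<Gamma>\<close> would have torsion.\<close>

lemma exists_hyperbolic_power:
  assumes a: "a \<in> Gamma_tilde p l" "qnorm a = p ^ r" "\<not> scalar a"
  shows "\<exists>N \<ge> 1. 2 * cancellation p (a ^ N) (a ^ N) < tree_dist p (a ^ N)"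
proof (rule ccontr)
  assume "\<not> ?thesis"
  then have bounded: "tree_dist p (a ^ (2 ^ j)) \<le> tree_dist p a" for j
    using tree_dist_power_of_two_bounded Gamma_tilde_nonzero[OF a(1)] by (meson not_le)
  define S where "S = {y. qnorm y \<le> p ^ nat (tree_dist p a)}"
  have small: "\<exists>y\<in>S. proportional (a ^ (2 ^ j)) y" for j
  proof -
    have "qnorm (a ^ (2 ^ j)) = p ^ (r * 2 ^ j) * l ^ 0"
      using a(2) by (simp add: qnorm_power power_mult)
    then obtain y where y: "proportional (a ^ (2 ^ j)) y" "qnorm y = p ^ nat (tree_dist p (a ^ (2 ^ j))) * l ^ 0"
      using exists_proportional_qnorm Gamma_tilde_nonzero[OF Gamma_tilde_power[OF a(1)]] by blast
    have "p ^ nat (tree_dist p (a ^ (2 ^ j))) \<le> p ^ nat (tree_dist p a)"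
      using bounded[of j] prime_gt_1_int[OF prime] by (intro power_increasing) auto
    then have "y \<in> S"
      using y(2) unfolding S_def by (simp only: power_0 mult_1_right mem_Collect_eq)
    then show ?thesis
      using y(1) by blast
  qed
  obtain i j where ij: "i < j" "proportional (a ^ (2 ^ i)) (a ^ (2 ^ j))"
    using exists_proportional_pair[of S "\<lambda>k. a ^ (2 ^ k)"] finite_qnorm_le small
    unfolding S_def by blast
  then have "scalar (a ^ (2 ^ j - 2 ^ i))"
    using scalar_if_proportional_powers[OF Gamma_tilde_nonzero[OF a(1)]] by simp
  moreover have "2 ^ j - 2 ^ i \<ge> (1::nat)"
    using ij(1) by (simp add: Suc_leI)
  ultimately show False
    using not_scalar_power_Gamma_tilde[OF a(1) a(3)] by blast
qed

end

lemma mult_twist_cancel: "x * (qconj x * (b * y)) * qconj y = of_int (qnorm x * qnorm y) * b"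
proof -
  have "x * (qconj x * (b * y)) * qconj y = of_int (qnorm x) * (b * (y * qconj y))"
    by (simp only: mult_qconj_left_cancel mult.assoc)
  also have "\<dots> = of_int (qnorm x) * (of_int (qnorm y) * b)"
    by (simp only: mult_qconj of_int_mult_commute)
  finally show ?thesis
    by (simp only: of_int_mult mult.assoc)
qed

lemma proportional_if_twisted_proportional:
  assumes s: "s \<noteq> 0" "s' \<noteq> 0" and ij: "i < j"
    and pr: "proportional (qconj (s ^ i) * (b * s' ^ i)) (qconj (s ^ j) * (b * s' ^ j))"
  shows "proportional (s ^ (j - i) * b * qconj (s' ^ (j - i))) b"
proof -
  define m where "m = j - i"
  define c where "c = qnorm (s ^ i) * qnorm (s' ^ i)"
  define c' where "c' = qnorm (s ^ j) * qnorm (s' ^ j)"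
  have cs: "c \<noteq> 0" "c' \<noteq> 0"
    using s by (simp_all add: c_def c'_def)
  have "s ^ j = s ^ m * s ^ i" "s' ^ j = s' ^ m * s' ^ i"
    using ij by (simp_all add: m_def flip: power_add)
  then have "s ^ j = s ^ m * s ^ i" "qconj (s' ^ j) = qconj (s' ^ i) * qconj (s' ^ m)"
    by (simp_all add: qconj_mult)
  then have "s ^ j * (qconj (s ^ i) * (b * s' ^ i)) * qconj (s' ^ j)
      = s ^ m * (s ^ i * (qconj (s ^ i) * (b * s' ^ i)) * qconj (s' ^ i)) * qconj (s' ^ m)"
    by (simp only: mult.assoc)
  also have "\<dots> = s ^ m * (of_int c * b) * qconj (s' ^ m)"
    by (simp only: mult_twist_cancel c_def)
  also have "\<dots> = of_int c * (s ^ m * b * qconj (s' ^ m))"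
    by (simp only: mult.assoc mult_of_int_left_commute)
  finally have "proportional (of_int c * (s ^ m * b * qconj (s' ^ m))) (of_int c' * b)"
    using proportional_mult_right[OF proportional_mult_left[OF pr], of "s ^ j" "qconj (s' ^ j)"]
    by (simp only: mult_twist_cancel c'_def)
  then show ?thesis
    using cs by (simp add: m_def proportional_of_int_mult_left_iff proportional_of_int_mult_right_iff)
qed

context Gamma_params
begin

lemma commute_if_conjugate_proportional:
  assumes s: "s \<in> Gamma_tilde p l" and b: "b \<in> Gamma_tilde p l" and m: "m \<ge> 1"
    and pr: "proportional (s ^ m * b * qconj (s ^ m)) b"
  shows "s * b = b * s"
proof -
  have sm: "s ^ m \<in> Gamma_tilde p l"
    using Gamma_tilde_power[OF s] .
  have "s ^ m * b * qconj (s ^ m) * s ^ m = of_int (qnorm (s ^ m)) * (s ^ m * b)"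
    by (simp only: mult.assoc qconj_mult_self of_int_mult_commute[symmetric] mult_of_int_left_commute)
  then have "proportional (s ^ m * b) (b * s ^ m)"
    using proportional_mult_right[OF pr, of "s ^ m"] Gamma_tilde_nonzero[OF sm]
    by (simp add: proportional_of_int_mult_left_iff)
  then have "s ^ m * b = b * s ^ m"
    using commute_if_proportional_commuted Gamma_tilde_q0_nonzero sm b by blast
  then show ?thesis
    using commute_if_power_commute_Gamma_tilde[OF s m] by blast
qed

lemma commute_if_sandwich_proportional:
  assumes s: "s \<in> Gamma_tilde p l" and b: "b \<in> Gamma_tilde p l" and m: "m \<ge> 1"
    and pr: "proportional (s ^ m * b * s ^ m) b"
  shows "s * b = b * s"
proof -
  have sm: "s ^ m \<in> Gamma_tilde p l" and N: "qnorm (s ^ m) \<noteq> 0"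
    using Gamma_tilde_power[OF s] Gamma_tilde_nonzero[OF Gamma_tilde_power[OF s]] by auto
  have "s ^ m * b * s ^ m * qconj (s ^ m) = of_int (qnorm (s ^ m)) * (s ^ m * b)"
    by (simp only: mult.assoc mult_qconj of_int_mult_commute[symmetric] mult_of_int_left_commute)
  then have right: "proportional (s ^ m * b) (b * qconj (s ^ m))"
    using proportional_mult_right[OF pr, of "qconj (s ^ m)"] N by (simp add: proportional_of_int_mult_left_iff)
  have "qconj (s ^ m) * (s ^ m * b * s ^ m) = of_int (qnorm (s ^ m)) * (b * s ^ m)"
    by (simp only: mult.assoc qconj_mult_left_cancel)
  then have left: "proportional (b * s ^ m) (qconj (s ^ m) * b)"
    using proportional_mult_left[OF pr, of "qconj (s ^ m)"] N by (simp add: proportional_of_int_mult_left_iff)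
  have "proportional (s ^ m * (b * b)) ((b * qconj (s ^ m)) * b)"
    using proportional_mult_right[OF right, of b] by (simp only: mult.assoc)
  also have "(b * qconj (s ^ m)) * b = b * (qconj (s ^ m) * b)"
    by (simp only: mult.assoc)
  finally have "proportional (s ^ m * (b * b)) ((b * b) * s ^ m)"
    using proportional_mult_left[OF proportional_sym[OF left], of b] proportional_trans
    by (simp only: mult.assoc)
  then have "s ^ m * (b * b) = (b * b) * s ^ m"
    using commute_if_proportional_commuted Gamma_tilde_q0_nonzero sm Gamma_tilde_mult[OF b b] by blast
  then have "b ^ 2 * s = s * b ^ 2"
    using commute_if_power_commute_Gamma_tilde[OF s m] by (simp add: power2_eq_square)
  then show ?thesis
    using commute_if_power_commute_Gamma_tilde[OF b, of 2] by simp
qed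

end

section \<open>Ping-pong for a hyperbolic element and a \<open>p\<close>-unit\<close>

lemma qconj_conj: "qconj (b * x * qconj b) = b * qconj x * qconj b"
  by (simp add: qconj_mult mult.assoc)

lemma cancellation_qconj: "cancellation p (qconj x) (qconj y) = cancellation p y x"
  by (simp add: cancellation_def add.commute flip: qconj_mult)

lemma (in prime_int) cancellation_unit_conj:
  assumes b: "\<not> p dvd qnorm b" and x: "x \<noteq> 0" and y: "y \<noteq> 0"
  shows "cancellation p (b * x * qconj b) (b * y * qconj b) = cancellation p x y"
proof -
  have b0: "b \<noteq> 0" and bc: "\<not> p dvd qnorm (qconj b)"
    using b by auto
  have "cancellation p (b * x * qconj b) (b * y * qconj b) = gromov p (b * qconj x * qconj b) (b * y * qconj b)"
    by (simp add: gromov_def qconj_conj)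
  also have "\<dots> = gromov p (b * qconj x) (b * y)"
    using gromov_mult_unit[OF bc] gromov_commute b0 x y by (metis mult_eq_0_iff qconj_eq_0_iff)
  also have "\<dots> = cancellation p x y"
    using gromov_unit_mult[OF b] x y by (simp add: gromov_def)
  finally show ?thesis .
qed

text \<open>The quaternion representing the value of a letter at \<open>\<psi>(U)\<close> and its conjugate
  \<open>\<psi>(b U b\<^sup>-\<^sup>1)\<close>.\<close>

definition letter :: "hq \<Rightarrow> hq \<Rightarrow> bool \<times> bool \<Rightarrow> hq" where
  "letter U b c = (let g = (if snd c then U else qconj U) in if fst c then g else b * g * qconj b)"

lemma (in Gamma_params) prod_list_letter_in_Gamma_tilde:
  assumes "U \<in> Gamma_tilde p l" "b \<in> Gamma_tilde p l"
  shows "prod_list (map (letter U b) w) \<in> Gamma_tilde p l"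
  using assms by (induct w) (simp_all add: Gamma_tilde_one Gamma_tilde_mult Gamma_tilde_qconj letter_def Let_def)

lemma (in Gamma_params) word_val_psi_class:
  assumes U: "U \<in> Gamma_tilde p l" and b: "b \<in> Gamma_tilde p l"
  shows "word_val (Gamma_grp p l) (psi_class p l U) (psi_class p l (b * U * qconj b)) w
    = psi_class p l (prod_list (map (letter U b) w))"
proof (induct w)
  case Nil
  then show ?case
    by (simp add: word_val_def one_Gamma_grp)
next
  case (Cons c w)
  have letter_in: "letter U b c \<in> Gamma_tilde p l"
    using prod_list_letter_in_Gamma_tilde[OF U b, of "[c]"] by simp
  have prod_in: "prod_list (map (letter U b) w) \<in> Gamma_tilde p l"
    using prod_list_letter_in_Gamma_tilde[OF U b] .
  have "letter_val (Gamma_grp p l) (psi_class p l U) (psi_class p l (b * U * qconj b)) c = psi_class p l (letter U b c)"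
    using U b inv_psi_class qconj_conj Gamma_tilde_mult Gamma_tilde_qconj
    by (simp add: letter_val_def letter_def Let_def)
  then show ?case
    using Cons psi_class_mult[OF letter_in prod_in] by (simp add: word_val_def)
qed

locale hyperbolic_pair = two_odd_primes +
  fixes u b :: hq and r s :: nat
  assumes u: "u \<in> Gamma_tilde p l" "qnorm u = p ^ r"
    and hyperbolic: "2 * cancellation p u u < tree_dist p u"
    and b: "b \<in> Gamma_tilde p l" "qnorm b = l ^ s"
    and noncommuting: "u * b \<noteq> b * u"
begin

text \<open>One more than the number of candidate representatives (of norm \<open>p\<^sup>d l\<^sup>s\<close>,
  \<open>d \<le> 2 cancellation p u u\<close>) for the twisted elements \<open>u\<^sup>-\<^sup>j b u\<^sup>\<plusminus>\<^sup>j\<close>.\<close>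

definition class_bound :: nat where
  "class_bound = card {y. qnorm y \<le> p ^ nat (2 * cancellation p u u) * l ^ s} + 1"

lemma u_nonzero: "u \<noteq> 0"
  using Gamma_tilde_nonzero[OF u(1)] .

lemma b_nonzero: "b \<noteq> 0"
  using Gamma_tilde_nonzero[OF b(1)] .

lemma b_unit: "\<not> p dvd qnorm b"
  using not_dvd_qnorm_Gamma_l[OF b(2)] .

lemma translation_length_pos: "translation_length p u \<ge> 1"
  using hyperbolic by (simp add: translation_length_def)

lemma cancellation_self_nonneg: "cancellation p u u \<ge> 0"
  using cancellation_nonneg[OF u_nonzero u_nonzero] .

lemma u_or_qconj:
  assumes "x \<in> {u, qconj u}"
  shows "x \<in> Gamma_tilde p l" "x \<noteq> 0" "qnorm x = p ^ r" "x * b \<noteq> b * x"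
    and "j \<ge> 1 \<Longrightarrow> tree_dist p (x ^ j) = int j * translation_length p u + 2 * cancellation p u u"
proof -
  show x: "x \<in> Gamma_tilde p l"
    using assms u Gamma_tilde_qconj by auto
  then show "x \<noteq> 0"
    by (rule Gamma_tilde_nonzero)
  show "qnorm x = p ^ r"
    using assms u by auto
  show "x * b \<noteq> b * x"
    using assms noncommuting commute_qconj_iff by auto
  assume "j \<ge> 1"
  then have "tree_dist p (u ^ j) = int j * translation_length p u + 2 * cancellation p u u"
    using tree_dist_power[OF u_nonzero hyperbolic] by simp
  then show "tree_dist p (x ^ j) = int j * translation_length p u + 2 * cancellation p u u"
    using assms by (auto simp flip: qconj_power)
qed

text \<open>A large Gromov product of \<open>x\<^sup>M v\<^sub>0\<close> and \<open>b y\<^sup>M v\<^sub>0\<close> forces the geodesics towards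
  \<open>x\<^sup>M v\<^sub>0\<close> and \<open>b y\<^sup>M v\<^sub>0 = b y\<^sup>M b\<^sup>-\<^sup>1 v\<^sub>0\<close> to fellow-travel, so that
  \<open>x\<^sup>j v\<^sub>0\<close> and \<open>b y\<^sup>j v\<^sub>0\<close> stay close for \<open>j \<le> class_bound\<close>.\<close>

lemma tree_dist_twisted_le:
  assumes x: "x \<in> {u, qconj u}" and y: "y \<in> {u, qconj u}" and j: "1 \<le> j" "j \<le> K" "K < M"
    and big: "gromov p (x ^ M) (b * y ^ M) > int K * translation_length p u + cancellation p u u"
  shows "tree_dist p (qconj (x ^ j) * (b * y ^ j)) \<le> 2 * cancellation p u u"
proof -
  let ?t = "translation_length p u" and ?c = "cancellation p u u"
  note g = u_or_qconj[OF x] and h = u_or_qconj[OF y]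
  have nz: "x ^ n \<noteq> 0" "b * y ^ n \<noteq> 0" for n
    using g(2) h(2) b_nonzero by auto
  have "gromov p (x ^ j) (x ^ M) = int j * ?t + ?c"
    using gromov_powers[OF g(2) g(5)] j by simp
  moreover have "gromov p (b * y ^ M) (b * y ^ j) = gromov p (y ^ j) (y ^ M)"
    using gromov_unit_mult[OF b_unit] h(2) by (simp add: gromov_commute)
  then have "gromov p (b * y ^ M) (b * y ^ j) = int j * ?t + ?c"
    using gromov_powers[OF h(2) h(5)] j by simp
  moreover have "int j * ?t \<le> int K * ?t"
    using j translation_length_pos by (intro mult_right_mono) auto
  ultimately have "gromov p (x ^ j) (b * y ^ j) \<ge> int j * ?t + ?c"
    using gromov_min_le[OF nz(1) nz(1) nz(2), of j M M] gromov_min_le[OF nz(1) nz(2) nz(2), of j M j] big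
    by linarith
  moreover have "tree_dist p (b * y ^ j) = tree_dist p (y ^ j)"
    using tree_dist_unit_mult[OF b_unit] nz by simp
  ultimately show ?thesis
    using gromov_eq_tree_dist[OF nz(1) nz(2), of j j] g(5) h(5) j by simp
qed

lemma twisted_not_proportional:
  assumes x: "x \<in> {u, qconj u}" and y: "y \<in> {u, qconj u}" and ij: "i < j"
  shows "\<not> proportional (qconj (x ^ i) * (b * y ^ i)) (qconj (x ^ j) * (b * y ^ j))"
proof
  assume "proportional (qconj (x ^ i) * (b * y ^ i)) (qconj (x ^ j) * (b * y ^ j))"
  then have pr: "proportional (x ^ (j - i) * b * qconj (y ^ (j - i))) b"
    using proportional_if_twisted_proportional u_or_qconj(2) x y ij by blast
  have m: "j - i \<ge> 1"
    using ij by simp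
  have "y = x \<or> y = qconj x"
    using x y by auto
  then have "x * b = b * x"
  proof
    assume "y = x"
    then show ?thesis
      using commute_if_conjugate_proportional[OF u_or_qconj(1)[OF x] b(1) m] pr by simp
  next
    assume "y = qconj x"
    then have "qconj (y ^ (j - i)) = x ^ (j - i)"
      by (simp flip: qconj_power)
    then show ?thesis
      using commute_if_sandwich_proportional[OF u_or_qconj(1)[OF x] b(1) m] pr by simp
  qed
  then show False
    using u_or_qconj(4)[OF x] by blast
qed

lemma gromov_ping_bound:
  assumes x: "x \<in> {u, qconj u}" and y: "y \<in> {u, qconj u}" and M: "class_bound < M"
  shows "gromov p (x ^ M) (b * y ^ M) \<le> int class_bound * translation_length p u + cancellation p u u"
proof (rule ccontr)
  define S where "S = {y. qnorm y \<le> p ^ nat (2 * cancellation p u u) * l ^ s}"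
  define e where "e j = qconj (x ^ j) * (b * y ^ j)" for j
  assume "\<not> ?thesis"
  then have D: "tree_dist p (e j) \<le> 2 * cancellation p u u" if "1 \<le> j" "j \<le> class_bound" for j
    using tree_dist_twisted_le[OF x y that M] by (simp add: e_def)
  have "\<exists>z\<in>S. proportional (e j) z" if j: "j \<in> {1..card S + 1}" for j
  proof -
    have "qnorm (e j) = p ^ (2 * (r * j)) * l ^ s"
      using u_or_qconj(3)[OF x] u_or_qconj(3)[OF y] b(2)
      by (simp add: e_def qnorm_mult qnorm_power power_mult_distrib ac_simps flip: power_mult power_add mult_2)
    moreover have "e j \<noteq> 0"
      using u_or_qconj(2)[OF x] u_or_qconj(2)[OF y] b_nonzero by (simp add: e_def)
    ultimately obtain z where z: "proportional (e j) z" "qnorm z = p ^ nat (tree_dist p (e j)) * l ^ s"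
      using exists_proportional_qnorm by blast
    have "p ^ nat (tree_dist p (e j)) \<le> p ^ nat (2 * cancellation p u u)"
      using D[of j] j prime_gt_1_int[OF prime] by (intro power_increasing) (auto simp: class_bound_def S_def)
    then have "z \<in> S"
      using z(2) prime_gt_1_int[OF prime_l] by (simp add: S_def)
    then show ?thesis
      using z(1) by blast
  qed
  then obtain i j where "i < j" "proportional (e i) (e j)"
    using exists_proportional_pair[of S e] finite_qnorm_le unfolding S_def by blast
  then show False
    using twisted_not_proportional[OF x y] by (simp add: e_def)
qed

definition ping_exponent :: nat where
  "ping_exponent = 2 * class_bound + 1"

definition ping_bound :: int where
  "ping_bound = int class_bound * translation_length p u + cancellation p u u"

abbreviation U :: hq where
  "U \<equiv> u ^ ping_exponent"

lemma U_or_qconj: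
  assumes "g \<in> {U, qconj U}"
  shows "g \<noteq> 0" "tree_dist p g = int ping_exponent * translation_length p u + 2 * cancellation p u u"
    and "h \<in> {U, qconj U} \<Longrightarrow> gromov p g (b * h) \<le> ping_bound"
proof -
  obtain x where x: "x \<in> {u, qconj u}" "g = x ^ ping_exponent"
    using assms by (auto simp: qconj_power)
  have "ping_exponent \<ge> 1"
    by (simp add: ping_exponent_def)
  then show "g \<noteq> 0" "tree_dist p g = int ping_exponent * translation_length p u + 2 * cancellation p u u"
    using u_or_qconj(2)[OF x(1)] u_or_qconj(5)[OF x(1)] x(2) by simp_all
  assume "h \<in> {U, qconj U}"
  then obtain y where y: "y \<in> {u, qconj u}" "h = y ^ ping_exponent"
    by (auto simp: qconj_power)
  have "class_bound < ping_exponent"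
    by (simp add: ping_exponent_def)
  then show "gromov p g (b * h) \<le> ping_bound"
    using gromov_ping_bound[OF x(1) y(1)] x(2) y(2) by (simp add: ping_bound_def)
qed

lemma cancellation_U_U: "cancellation p U U = cancellation p u u"
proof -
  have "U * U = u ^ (2 * ping_exponent)"
    by (simp add: mult_2 power_add)
  then have "tree_dist p (U * U) = int (2 * ping_exponent) * translation_length p u + 2 * cancellation p u u"
    using u_or_qconj(5)[of u "2 * ping_exponent"] by (simp add: ping_exponent_def)
  then show ?thesis
    using tree_dist_mult[of U U] U_or_qconj[of U] by (simp add: algebra_simps)
qed

lemma letter_cases:
  "letter U b c \<noteq> 0"
  "tree_dist p (letter U b c) = int ping_exponent * translation_length p u + 2 * cancellation p u u"
  using U_or_qconj b_unit b_nonzero tree_dist_unit_mult tree_dist_mult_unit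
  by (auto simp: letter_def Let_def)

lemma cancellation_same_le:
  assumes g: "g \<in> {U, qconj U}"
  shows "cancellation p g g \<le> ping_bound" "cancellation p (b * g * qconj b) (b * g * qconj b) \<le> ping_bound"
proof -
  show "cancellation p g g \<le> ping_bound"
    using g cancellation_U_U cancellation_qconj[of p U U] translation_length_pos
    by (auto simp: ping_bound_def)
  then show "cancellation p (b * g * qconj b) (b * g * qconj b) \<le> ping_bound"
    using cancellation_unit_conj[OF b_unit] U_or_qconj(1)[OF g] by simp
qed

lemma cancellation_cross_le:
  assumes g: "g \<in> {U, qconj U}" and h: "h \<in> {U, qconj U}"
  shows "cancellation p g (b * h * qconj b) \<le> ping_bound" "cancellation p (b * g * qconj b) h \<le> ping_bound"
proof -
  have bc: "\<not> p dvd qnorm (qconj b)"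
    using b_unit by simp
  have g': "qconj g \<in> {U, qconj U}"
    using g by auto
  have nz: "g \<noteq> 0" "h \<noteq> 0" "b \<noteq> 0"
    using U_or_qconj(1) g h b_nonzero by auto
  have "cancellation p g (b * h * qconj b) = gromov p (qconj g) (b * h)"
    using gromov_mult_unit[OF bc, of "qconj g" "b * h"] nz by (simp add: gromov_def)
  then show "cancellation p g (b * h * qconj b) \<le> ping_bound"
    using U_or_qconj(3)[OF g' h] by simp
  have "cancellation p (b * g * qconj b) h = gromov p (b * qconj g * qconj b) h"
    by (simp add: gromov_def qconj_conj)
  also have "\<dots> = gromov p h (b * qconj g * qconj b)"
    by (rule gromov_commute)
  also have "\<dots> = gromov p h (b * qconj g)"
    using gromov_mult_unit[OF bc, of h "b * qconj g"] nz by simp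
  finally show "cancellation p (b * g * qconj b) h \<le> ping_bound"
    using U_or_qconj(3)[OF h g'] by simp
qed

lemma cancellation_letters_le:
  assumes "\<not> (fst c = fst d \<and> snd c \<noteq> snd d)"
  shows "cancellation p (letter U b c) (letter U b d) \<le> ping_bound"
proof -
  define g where "g = (if snd c then U else qconj U)"
  define h where "h = (if snd d then U else qconj U)"
  have gh: "g \<in> {U, qconj U}" "h \<in> {U, qconj U}"
    by (auto simp: g_def h_def)
  consider "fst c = fst d" "h = g" | "fst c" "\<not> fst d" | "\<not> fst c" "fst d"
    using assms by (cases "fst c"; cases "fst d") (auto simp: g_def h_def)
  then show ?thesis
    using cancellation_same_le[OF gh(1)] cancellation_cross_le[OF gh]
    by cases (auto simp: letter_def Let_def g_def h_def)
qed

lemma not_scalar_reduced_word: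
  assumes "w \<noteq> []" "reduced_word w"
  shows "\<not> scalar (prod_list (map (letter U b) w))"
proof
  let ?xs = "map (letter U b) w"
  assume sc: "scalar (prod_list ?xs)"
  have "successively (\<lambda>x y. cancellation p x y \<le> ping_bound) ?xs"
    using assms(2) cancellation_letters_le
    unfolding reduced_word_def successively_map by (auto elim: successively_mono)
  moreover have long: "tree_dist p (letter U b c) > 2 * ping_bound" for c
    using letter_cases(2) translation_length_pos by (simp add: ping_bound_def ping_exponent_def algebra_simps)
  ultimately have "prod_list ?xs \<noteq> 0" "tree_dist p (prod_list ?xs) \<ge> tree_dist p (hd ?xs)"
    using ping_pong_prod_list[of ?xs ping_bound] assms(1) letter_cases(1) by auto
  moreover have "tree_dist p (hd ?xs) > 0"
  proof -
    have "ping_bound \<ge> 0"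
      using translation_length_pos cancellation_self_nonneg by (simp add: ping_bound_def)
    obtain c w' where "w = c # w'"
      using assms(1) by (cases w) auto
    then show ?thesis
      using long[of c] \<open>ping_bound \<ge> 0\<close> by simp
  qed
  ultimately show False
    using sc tree_dist_of_int scalar_eq_of_int by (metis less_le_not_le of_int_0)
qed

lemma free_pair_U: "free_pair (Gamma_grp p l) (psi_class p l U) (psi_class p l (b * U * qconj b))"
  unfolding free_pair_def
  using word_val_psi_class[OF Gamma_tilde_power[OF u(1)] b(1)] not_scalar_reduced_word
    psi_class_eq_one_iff[OF prod_list_letter_in_Gamma_tilde[OF Gamma_tilde_power[OF u(1)] b(1)]]
  by simp

end

context two_odd_primes
begin

lemma noncommuting_contains_free:
  assumes a: "a \<in> Gamma_tilde p l" "\<not> scalar a" "qnorm a = p ^ r"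
    and b: "b \<in> Gamma_tilde p l" "qnorm b = l ^ s"
    and ab: "a * b \<noteq> b * a"
  shows "contains_free_rank2 (Gamma_grp p l) (generate (Gamma_grp p l) {psi_class p l a, psi_class p l b})"
proof -
  let ?G = "Gamma_grp p l" and ?H = "generate (Gamma_grp p l) {psi_class p l a, psi_class p l b}"
  obtain N where N: "N \<ge> 1" "2 * cancellation p (a ^ N) (a ^ N) < tree_dist p (a ^ N)"
    using exists_hyperbolic_power[OF a(1,3,2)] by blast
  have "a ^ N * b \<noteq> b * a ^ N"
    using commute_if_power_commute_Gamma_tilde[OF a(1) N(1)] ab by blast
  then interpret hyperbolic_pair p l "a ^ N" b "r * N" s
    using Gamma_tilde_power[OF a(1)] a(3) N(2) b by unfold_locales (simp_all add: qnorm_power power_mult)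
  have u_power: "U \<in> Gamma_tilde p l"
    using Gamma_tilde_power[OF Gamma_tilde_power[OF a(1)]] .
  have "psi_class p l U = psi_class p l a [^]\<^bsub>?G\<^esub> (N * ping_exponent)"
    using pow_psi_class Gamma_tilde_power[OF a(1)] a(1) by (simp add: power_mult)
  moreover have "psi_class p l a [^]\<^bsub>?G\<^esub> (n::nat) \<in> ?H" for n
    by (induct n) (simp_all add: generate.one generate.eng generate.incl)
  ultimately have "psi_class p l U \<in> ?H"
    by simp
  moreover have "psi_class p l (b * U * qconj b)
      = psi_class p l b \<otimes>\<^bsub>?G\<^esub> psi_class p l U \<otimes>\<^bsub>?G\<^esub> inv\<^bsub>?G\<^esub> psi_class p l b"
    using psi_class_mult[OF b(1) u_power] psi_class_mult[OF Gamma_tilde_mult[OF b(1) u_power] Gamma_tilde_qconj[OF b(1)]]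
    by (simp add: inv_psi_class b(1))
  ultimately have "psi_class p l (b * U * qconj b) \<in> ?H"
    by (auto intro: generate.eng generate.incl generate.inv)
  then show ?thesis
    using free_pair_U \<open>psi_class p l U \<in> ?H\<close> unfolding contains_free_rank2_def by blast
qed

end

theorem corollary2p8:
  fixes p l :: int and a b :: "hq set"
  assumes "Factorial_Ring.prime p" and "Factorial_Ring.prime l" and "odd p" and "odd l" and "p \<noteq> l"
    and "a \<in> Gamma_p p l" and "a \<noteq> \<one>\<^bsub>Gamma_grp p l\<^esub>"
    and "b \<in> Gamma_l p l" and "b \<noteq> \<one>\<^bsub>Gamma_grp p l\<^esub>"
  shows "(Gamma_grp p l)\<lparr>carrier := generate (Gamma_grp p l) {a, b}\<rparr>
           \<cong> integer_group \<times>\<times> integer_group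
         \<or> contains_free_rank2 (Gamma_grp p l) (generate (Gamma_grp p l) {a, b})"
proof -
  interpret two_odd_primes p l
    using assms(1-5) by unfold_locales
  obtain x r where x: "x \<in> Gamma_tilde p l" "a = psi_class p l x" "qnorm x = p ^ r"
    using Gamma_p_representative[OF assms(6)] .
  obtain y s where y: "y \<in> Gamma_tilde p l" "b = psi_class p l y" "qnorm y = l ^ s"
    using Gamma_l_representative[OF assms(8)] .
  have "\<not> scalar x" "\<not> scalar y"
    using assms(7,9) x y psi_class_eq_one_iff by auto
  then show ?thesis
    using commuting_generate_iso[OF x(1) _ x(3) y(1) _ y(3)] noncommuting_contains_free[OF x(1) _ x(3) y(1) y(3)]
    unfolding x(2) y(2) by blast
qed

end
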